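(* Let Assumptions A1–A3 hold. Then for every $\boldsymbol\varphi\in H$ the bilinear form $a_{\boldsymbol\varphi}$ is symmetric, bounded on $H\times H$, and coercive with coercivity constant $1$ with respect to $\|\cdot\|_{\mathrm R}$, i.e. $a_{\boldsymbol\varphi}(\mathbf v,\mathbf v)\ge\|\mathbf v\|_{\mathrm R}^2$ for all $\mathbf v\in H$.
   Context: $\mathcal D\subset\mathbb R^d$, $d\in\{2,3\}$, bounded convex Lipschitz domain; $p\ge1$; $H=[H^1_0(\mathcal D,\mathbb C)]^p$ as a real Hilbert space. Parameters $V_j$, $\Omega_j\in\mathbb R$, $K=[\kappa_{ij}]$. A1: $V_j\in L^\infty(\mathcal D)$, $V_j\ge0$ a.e. A2: for each $j$ there is $\varepsilon_j>0$ with $V_j(x)-\frac{1+\varepsilon_j}{4}\Omega_j^2(x_1^2+x_2^2)\ge0$ a.e. A3: $K$ symmetric with nonnegative entries. $\mathcal L_3=-i(x_1\partial_{x_2}-x_2\partial_{x_1})$, $\rho_j(\boldsymbol\varphi)=\sum_i\kappa_{ij}|\varphi_i|^2$, $a_{\boldsymbol\varphi}(\mathbf v,\mathbf w)=\sum_j\mathrm{Re}\int_{\mathcal D}\nabla v_j\cdot\overline{\nabla w_j}+V_jv_j\overline{w_j}-\Omega_j\overline{w_j}\mathcal L_3v_j+\rho_j(\boldsymbol\varphi)v_j\overline{w_j}\,dx$. With $R(x)=(x_2,-x_1)$ ($d=2$) or $(x_2,-x_1,0)$ ($d=3$), $V^{\mathrm R}_j=V_j-\frac14\Omega_j^2(x_1^2+x_2^2)$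 and $\nabla^{\mathrm R}v_j=\nabla v_j+i\frac{\Omega_j}{2}R\,v_j$, define $(\mathbf v,\mathbf w)_{\mathrm R}=\sum_j\mathrm{Re}\int_{\mathcal D}\nabla^{\mathrm R}v_j\cdot\overline{\nabla^{\mathrm R}w_j}+V_j^{\mathrm R}v_j\overline{w_j}\,dx$ and $\|\mathbf v\|_{\mathrm R}=(\mathbf v,\mathbf v)_{\mathrm R}^{1/2}$ (a norm equivalent to the $H$-norm). *)

theory Defs
  imports "HOL-Analysis.Analysis"
begin

definition dderiv :: "'a::euclidean_space \<Rightarrow> ('a \<Rightarrow> complex) \<Rightarrow> 'a \<Rightarrow> complex" where
  "dderiv b f = (\<lambda>x. frechet_derivative f (at x) b)"

definition smooth_fun :: "('a::euclidean_space \<Rightarrow> complex) \<Rightarrow> bool" where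
  "smooth_fun f \<longleftrightarrow> (\<forall>bs. set bs \<subseteq> Basis \<longrightarrow> (\<forall>x. fold dderiv bs f differentiable (at x)))"

definition test_fun :: "'a::euclidean_space set \<Rightarrow> ('a \<Rightarrow> complex) \<Rightarrow> bool" where
  "test_fun D \<phi> \<longleftrightarrow> smooth_fun \<phi> \<and> compact (closure {x. \<phi> x \<noteq> 0}) \<and> closure {x. \<phi> x \<noteq> 0} \<subseteq> D"

definition L2 :: "'a::euclidean_space set \<Rightarrow> ('a \<Rightarrow> complex) \<Rightarrow> bool" where
  "L2 D u \<longleftrightarrow> u \<in> borel_measurable (lebesgue_on D) \<and> integrable (lebesgue_on D) (\<lambda>x. (cmod (u x))\<^sup>2)"

definition L2_dist2 :: "'a::euclidean_space set \<Rightarrow> ('a \<Rightarrow> complex) \<Rightarrow> ('a \<Rightarrow> complex) \<Rightarrow> real" where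
  "L2_dist2 D u w = (LINT x|lebesgue_on D. (cmod (u x - w x))\<^sup>2)"

definition weak_partial :: "'a::euclidean_space set \<Rightarrow> ('a \<Rightarrow> complex) \<Rightarrow> 'a \<Rightarrow> ('a \<Rightarrow> complex) \<Rightarrow> bool" where
  "weak_partial D u b g \<longleftrightarrow>
     (\<forall>\<phi>. test_fun D \<phi> \<longrightarrow>
        (LINT x|lebesgue_on D. u x * dderiv b \<phi> x) = - (LINT x|lebesgue_on D. g x * \<phi> x))"

definition wpd :: "'a::euclidean_space set \<Rightarrow> 'a \<Rightarrow> ('a \<Rightarrow> complex) \<Rightarrow> 'a \<Rightarrow> complex" where
  "wpd D b u = (SOME g. L2 D g \<and> weak_partial D u b g)"

text \<open>H^1_0(D,C): closure of C_c^infinity(D) in the H^1 norm.\<close>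
definition H10 :: "'a::euclidean_space set \<Rightarrow> ('a \<Rightarrow> complex) \<Rightarrow> bool" where
  "H10 D u \<longleftrightarrow> L2 D u \<and> (\<forall>b\<in>Basis. \<exists>g. L2 D g \<and> weak_partial D u b g) \<and>
     (\<exists>\<phi>s::nat \<Rightarrow> 'a \<Rightarrow> complex. (\<forall>n. test_fun D (\<phi>s n)) \<and>
        (\<lambda>n. L2_dist2 D (\<phi>s n) u) \<longlonglongrightarrow> 0 \<and>
        (\<forall>b\<in>Basis. (\<lambda>n. L2_dist2 D (dderiv b (\<phi>s n)) (wpd D b u)) \<longlonglongrightarrow> 0))"

text \<open>H = [H^1_0(D,C)]^p, vectors indexed by j < p.\<close>
definition inH :: "'a::euclidean_space set \<Rightarrow> nat \<Rightarrow> (nat \<Rightarrow> 'a \<Rightarrow> complex) \<Rightarrow> bool" where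
  "inH D p v \<longleftrightarrow> (\<forall>j<p. H10 D (v j))"

definition H_norm2 :: "'a::euclidean_space set \<Rightarrow> nat \<Rightarrow> (nat \<Rightarrow> 'a \<Rightarrow> complex) \<Rightarrow> real" where
  "H_norm2 D p v = (\<Sum>j<p. LINT x|lebesgue_on D.
       (cmod (v j x))\<^sup>2 + (\<Sum>b\<in>Basis. (cmod (wpd D b (v j) x))\<^sup>2))"

definition L3 :: "'a::euclidean_space set \<Rightarrow> 'a \<Rightarrow> 'a \<Rightarrow> ('a \<Rightarrow> complex) \<Rightarrow> 'a \<Rightarrow> complex" where
  "L3 D e1 e2 v = (\<lambda>x. - \<i> * (of_real (x \<bullet> e1) * wpd D e2 v x - of_real (x \<bullet> e2) * wpd D e1 v x))"

definition rho :: "nat \<Rightarrow> (nat \<Rightarrow> nat \<Rightarrow> real) \<Rightarrow> nat \<Rightarrow> (nat \<Rightarrow> 'a \<Rightarrow> complex) \<Rightarrow> 'a \<Rightarrow> real" where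
  "rho p K j \<phi> = (\<lambda>x. \<Sum>i<p. K i j * (cmod (\<phi> i x))\<^sup>2)"

definition a_integrand ::
  "'a::euclidean_space set \<Rightarrow> 'a \<Rightarrow> 'a \<Rightarrow> nat \<Rightarrow> (nat \<Rightarrow> 'a \<Rightarrow> real) \<Rightarrow> (nat \<Rightarrow> real) \<Rightarrow>
   (nat \<Rightarrow> nat \<Rightarrow> real) \<Rightarrow> (nat \<Rightarrow> 'a \<Rightarrow> complex) \<Rightarrow> nat \<Rightarrow>
   (nat \<Rightarrow> 'a \<Rightarrow> complex) \<Rightarrow> (nat \<Rightarrow> 'a \<Rightarrow> complex) \<Rightarrow> 'a \<Rightarrow> complex" where
  "a_integrand D e1 e2 p V \<Omega> K \<phi> j v w = (\<lambda>x.
      (\<Sum>b\<in>Basis. wpd D b (v j) x * cnj (wpd D b (w j) x))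
      + of_real (V j x) * v j x * cnj (w j x)
      - of_real (\<Omega> j) * cnj (w j x) * L3 D e1 e2 (v j) x
      + of_real (rho p K j \<phi> x) * v j x * cnj (w j x))"

definition a_form ::
  "'a::euclidean_space set \<Rightarrow> 'a \<Rightarrow> 'a \<Rightarrow> nat \<Rightarrow> (nat \<Rightarrow> 'a \<Rightarrow> real) \<Rightarrow> (nat \<Rightarrow> real) \<Rightarrow>
   (nat \<Rightarrow> nat \<Rightarrow> real) \<Rightarrow> (nat \<Rightarrow> 'a \<Rightarrow> complex) \<Rightarrow>
   (nat \<Rightarrow> 'a \<Rightarrow> complex) \<Rightarrow> (nat \<Rightarrow> 'a \<Rightarrow> complex) \<Rightarrow> real" where
  "a_form D e1 e2 p V \<Omega> K \<phi> v w =
     (\<Sum>j<p. Re (LINT x|lebesgue_on D. a_integrand D e1 e2 p V \<Omega> K \<phi> j v w x))"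

definition Rvec :: "'a::euclidean_space \<Rightarrow> 'a \<Rightarrow> 'a \<Rightarrow> 'a" where
  "Rvec e1 e2 x = (x \<bullet> e2) *\<^sub>R e1 - (x \<bullet> e1) *\<^sub>R e2"

definition VR :: "'a::euclidean_space \<Rightarrow> 'a \<Rightarrow> (nat \<Rightarrow> 'a \<Rightarrow> real) \<Rightarrow> (nat \<Rightarrow> real) \<Rightarrow> nat \<Rightarrow> 'a \<Rightarrow> real" where
  "VR e1 e2 V \<Omega> j x = V j x - (\<Omega> j)\<^sup>2 / 4 * ((x \<bullet> e1)\<^sup>2 + (x \<bullet> e2)\<^sup>2)"

definition gradR :: "'a::euclidean_space set \<Rightarrow> 'a \<Rightarrow> 'a \<Rightarrow> real \<Rightarrow> ('a \<Rightarrow> complex) \<Rightarrow> 'a \<Rightarrow> 'a \<Rightarrow> complex" where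
  "gradR D e1 e2 \<omega> u b = (\<lambda>x. wpd D b u x + \<i> * of_real (\<omega> / 2) * of_real (Rvec e1 e2 x \<bullet> b) * u x)"

definition R_inner ::
  "'a::euclidean_space set \<Rightarrow> 'a \<Rightarrow> 'a \<Rightarrow> nat \<Rightarrow> (nat \<Rightarrow> 'a \<Rightarrow> real) \<Rightarrow> (nat \<Rightarrow> real) \<Rightarrow>
   (nat \<Rightarrow> 'a \<Rightarrow> complex) \<Rightarrow> (nat \<Rightarrow> 'a \<Rightarrow> complex) \<Rightarrow> real" where
  "R_inner D e1 e2 p V \<Omega> v w = (\<Sum>j<p. Re (LINT x|lebesgue_on D.
      (\<Sum>b\<in>Basis. gradR D e1 e2 (\<Omega> j) (v j) b x * cnj (gradR D e1 e2 (\<Omega> j) (w j) b x))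
      + of_real (VR e1 e2 V \<Omega> j x) * v j x * cnj (w j x)))"

definition R_norm ::
  "'a::euclidean_space set \<Rightarrow> 'a \<Rightarrow> 'a \<Rightarrow> nat \<Rightarrow> (nat \<Rightarrow> 'a \<Rightarrow> real) \<Rightarrow> (nat \<Rightarrow> real) \<Rightarrow>
   (nat \<Rightarrow> 'a \<Rightarrow> complex) \<Rightarrow> real" where
  "R_norm D e1 e2 p V \<Omega> v = sqrt (R_inner D e1 e2 p V \<Omega> v v)"

end

theory Submission
  imports Defs
begin

text \<open>
  Symmetry: the kinetic, potential and density parts of \<open>a\<^sub>\<phi>\<close> are pointwise Hermitian, and the
  rotation part \<open>\<Omega>\<^sub>j w\<^sub>j\<^sup>* L\<^sub>3 v\<^sub>j\<close> becomes Hermitian after integrating by parts in \<open>x\<^sub>1\<close> and \<open>x\<^sub>2\<close>,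
  which is justified by approximating \<open>w\<^sub>j\<close> with test functions.

  Boundedness: every term is estimated by Cauchy-Schwarz on the bounded domain, except the density
  term \<open>\<rho>\<^sub>j(\<phi>) v\<^sub>j w\<^sub>j\<^sup>*\<close>, which needs \<open>\<phi>\<^sub>i, v\<^sub>j, w\<^sub>j \<in> L\<^sup>4\<close>. This is Ladyzhenskaya's inequality
  \<open>\<parallel>u\<parallel>\<^sub>4\<^sup>4 \<le> 2 \<parallel>u\<parallel>\<^sub>H\<^sub>1\<^sup>4\<close> in dimensions 2 and 3: along every coordinate line
  \<open>\<bar>u(x)\<bar>\<^sup>2 \<le> \<integral> 2 \<bar>u\<bar> \<bar>\<partial>u\<bar>\<close>; multiplying these bounds for two directions and integrating gives the
  estimate for test functions, and Fatou's lemma extends it to \<open>H\<^sup>1\<^sub>0\<close>.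

  Coercivity: completing the square, \<open>\<bar>\<nabla>v\<bar>\<^sup>2 + V \<bar>v\<bar>\<^sup>2 - Re (\<Omega> v\<^sup>* L\<^sub>3 v) = \<bar>\<nabla>\<^sup>R v\<bar>\<^sup>2 + V\<^sup>R \<bar>v\<bar>\<^sup>2\<close>
  pointwise, and \<open>\<rho>\<^sub>j(\<phi>) \<ge> 0\<close>. Assumption A2 makes \<open>V\<^sup>R \<ge> 0\<close>, so that \<open>\<parallel>v\<parallel>\<^sub>R\<^sup>2\<close> is the
  R-inner product of \<open>v\<close> with itself rather than a junk value of \<open>sqrt\<close>.
\<close>

section \<open>Iterated integrals on products of Euclidean spaces\<close>

lemma borel_measurable_compose_continuous:
  assumes "F \<in> borel_measurable borel" "continuous_on UNIV g"
  shows "(\<lambda>x. F (g x)) \<in> borel_measurable borel"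
  using measurable_compose[OF borel_measurable_continuous_onI[OF assms(2)] assms(1)] .

lemma borel_measurable_slice:
  fixes F :: "real \<times> real \<times> real \<Rightarrow> 'b::topological_space"
  assumes "F \<in> borel_measurable borel"
  shows "(\<lambda>x. F (fst x, snd x, r)) \<in> borel_measurable borel"
  by (rule borel_measurable_compose_continuous[OF assms]) (auto intro!: continuous_intros)

lemma borel_measurable_lborel_pair:
  "F \<in> borel_measurable borel \<Longrightarrow> F \<in> borel_measurable (lborel \<Otimes>\<^sub>M lborel)"
  by (simp add: lborel_prod measurable_lborel1)

lemma nn_integral_lborel_pair_fst:
  fixes F :: "'a::euclidean_space \<times> 'b::euclidean_space \<Rightarrow> ennreal"
  assumes "F \<in> borel_measurable borel"
  shows "(\<integral>\<^sup>+x. F x \<partial>lborel) = (\<integral>\<^sup>+s. \<integral>\<^sup>+y. F (s, y) \<partial>lborel \<partial>lborel)"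
  using borel_measurable_lborel_pair[OF assms]
  by (subst lborel_prod[symmetric]) (rule lborel.nn_integral_fst[symmetric])

lemma nn_integral_lborel_pair_snd:
  fixes F :: "'a::euclidean_space \<times> 'b::euclidean_space \<Rightarrow> ennreal"
  assumes "F \<in> borel_measurable borel"
  shows "(\<integral>\<^sup>+x. F x \<partial>lborel) = (\<integral>\<^sup>+y. \<integral>\<^sup>+s. F (s, y) \<partial>lborel \<partial>lborel)"
  using borel_measurable_lborel_pair[OF assms]
  by (subst lborel_prod[symmetric]) (rule lborel_pair.nn_integral_snd[symmetric])

lemma nn_integral_lborel_triple_s_t_r:
  fixes F :: "real \<times> real \<times> real \<Rightarrow> ennreal"
  assumes [measurable]: "F \<in> borel_measurable borel"
  shows "(\<integral>\<^sup>+x. F x \<partial>lborel) = (\<integral>\<^sup>+s. \<integral>\<^sup>+t. \<integral>\<^sup>+r. F (s, t, r) \<partial>lborel \<partial>lborel \<partial>lborel)"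
  by (subst nn_integral_lborel_pair_fst, measurable, subst nn_integral_lborel_pair_fst) simp_all

lemma nn_integral_lborel_triple_r_s_t:
  fixes F :: "real \<times> real \<times> real \<Rightarrow> ennreal"
  assumes [measurable]: "F \<in> borel_measurable borel"
  shows "(\<integral>\<^sup>+x. F x \<partial>lborel) = (\<integral>\<^sup>+r. \<integral>\<^sup>+s. \<integral>\<^sup>+t. F (s, t, r) \<partial>lborel \<partial>lborel \<partial>lborel)"
proof -
  have "(\<integral>\<^sup>+x. F x \<partial>lborel) = (\<integral>\<^sup>+y. \<integral>\<^sup>+s. F (s, y) \<partial>lborel \<partial>lborel)"
    by (rule nn_integral_lborel_pair_snd) measurable
  also have "\<dots> = (\<integral>\<^sup>+r. \<integral>\<^sup>+t. \<integral>\<^sup>+s. F (s, t, r) \<partial>lborel \<partial>lborel \<partial>lborel)"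
    by (rule nn_integral_lborel_pair_snd) measurable
  also have "\<dots> = (\<integral>\<^sup>+r. \<integral>\<^sup>+s. \<integral>\<^sup>+t. F (s, t, r) \<partial>lborel \<partial>lborel \<partial>lborel)"
  proof (rule nn_integral_cong)
    fix r :: real
    have [measurable]: "(\<lambda>(s, t). F (s, t, r)) \<in> borel_measurable borel"
      using borel_measurable_slice[OF assms] by (simp add: case_prod_beta)
    show "(\<integral>\<^sup>+t. \<integral>\<^sup>+s. F (s, t, r) \<partial>lborel \<partial>lborel) = (\<integral>\<^sup>+s. \<integral>\<^sup>+t. F (s, t, r) \<partial>lborel \<partial>lborel)"
      using nn_integral_lborel_pair_snd[of "\<lambda>(s, t). F (s, t, r)"]
        nn_integral_lborel_pair_fst[of "\<lambda>(s, t). F (s, t, r)"] by simp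
  qed
  finally show ?thesis .
qed

lemma nn_integral_lborel_slice:
  fixes F :: "real \<times> real \<times> real \<Rightarrow> ennreal"
  assumes [measurable]: "F \<in> borel_measurable borel"
  shows "(\<integral>\<^sup>+s. \<integral>\<^sup>+t. F (s, t, r) \<partial>lborel \<partial>lborel) = (\<integral>\<^sup>+x. F (fst x, snd x, r) \<partial>lborel)"
  using nn_integral_lborel_pair_fst[OF borel_measurable_slice[OF assms]] by simp

section \<open>Ladyzhenskaya's inequality\<close>

lemma two_mult_le_of_power2_le:
  fixes x1 x2 p q1 q2 :: real
  assumes "0 \<le> x1" "0 \<le> x2" "0 \<le> p" "0 \<le> q1" "0 \<le> q2" "x1^2 \<le> p * q1" "x2^2 \<le> p * q2"
  shows "2 * x1 * x2 \<le> p * (q1 + q2)"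
proof -
  have a: "x1^2 * x2^2 \<le> (p * q1) * (p * q2)" using assms by (intro mult_mono) auto
  have b: "4 * q1 * q2 \<le> (q1 + q2)^2"
  proof -
    have "0 \<le> (q1 - q2)^2" by simp
    then show ?thesis by (simp add: power2_eq_square algebra_simps)
  qed
  have "(2 * x1 * x2)^2 = 4 * (x1^2 * x2^2)" by (simp add: power2_eq_square)
  also have "\<dots> \<le> 4 * ((p * q1) * (p * q2))" using a by simp
  also have "\<dots> = p^2 * (4 * q1 * q2)" by (simp add: power2_eq_square)
  also have "\<dots> \<le> p^2 * (q1 + q2)^2" using b by (intro mult_left_mono) auto
  also have "\<dots> = (p * (q1 + q2))^2" by (simp add: power_mult_distrib)
  finally have "(2 * x1 * x2)^2 \<le> (p * (q1 + q2))^2" .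
  moreover have "0 \<le> p * (q1 + q2)" using assms by simp
  ultimately show ?thesis by (rule power2_le_imp_le)
qed

lemma two_mult_le_of_power2_le_ennreal:
  fixes x1 x2 p q1 q2 :: ennreal
  assumes "x1^2 \<le> p * q1" "x2^2 \<le> p * q2"
  shows "2 * x1 * x2 \<le> p * (q1 + q2)"
proof (cases "p = 0")
  case True
  then have "x1 = 0" using assms by (simp add: power2_eq_square)
  then show ?thesis by simp
next
  case pnz: False
  show ?thesis
  proof (cases "p = \<infinity> \<or> q1 = \<infinity> \<or> q2 = \<infinity>")
    case True
    show ?thesis
    proof (cases "q1 + q2 = 0")
      case True
      then have "q1 = 0" "q2 = 0" by auto
      then have "x1 = 0" using assms by (simp add: power2_eq_square)
      then show ?thesis by simp
    next
      case False
      then have "p * (q1 + q2) = \<infinity>" using True pnz by (auto simp: ennreal_mult_eq_top_iff)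
      then show ?thesis by simp
    qed
  next
    case False
    obtain P where P: "p = ennreal P" "0 \<le> P" using False ennreal_cases[of p] by auto
    obtain Q1 where Q1: "q1 = ennreal Q1" "0 \<le> Q1" using False ennreal_cases[of q1] by auto
    obtain Q2 where Q2: "q2 = ennreal Q2" "0 \<le> Q2" using False ennreal_cases[of q2] by auto
    have "p * q1 < \<infinity>" "p * q2 < \<infinity>" using P Q1 Q2 by (simp_all add: ennreal_mult[symmetric])
    have "x1^2 < \<infinity>" using assms(1) \<open>p * q1 < \<infinity>\<close> by (rule le_less_trans)
    then have "x1 \<noteq> \<infinity>" using power_eq_top_ennreal_iff[of x1 2] by auto
    then obtain X1 where X1: "x1 = ennreal X1" "0 \<le> X1" using ennreal_cases[of x1] by auto
    have "x2^2 < \<infinity>" using assms(2) \<open>p * q2 < \<infinity>\<close> by (rule le_less_trans)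
    then have "x2 \<noteq> \<infinity>" using power_eq_top_ennreal_iff[of x2 2] by auto
    then obtain X2 where X2: "x2 = ennreal X2" "0 \<le> X2" using ennreal_cases[of x2] by auto
    have h1: "X1^2 \<le> P * Q1" using assms(1) P Q1 X1
      by (simp add: ennreal_power ennreal_mult[symmetric] ennreal_le_iff)
    have h2: "X2^2 \<le> P * Q2" using assms(2) P Q2 X2
      by (simp add: ennreal_power ennreal_mult[symmetric] ennreal_le_iff)
    have "2 * X1 * X2 \<le> P * (Q1 + Q2)" using two_mult_le_of_power2_le[OF X1(2) X2(2) P(2) Q1(2) Q2(2) h1 h2] .
    then have "ennreal (2 * X1 * X2) \<le> ennreal (P * (Q1 + Q2))" by (rule ennreal_leI)
    moreover have "ennreal (2 * X1 * X2) = 2 * x1 * x2" using X1 X2 by (simp add: ennreal_mult)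
    moreover have "ennreal (P * (Q1 + Q2)) = p * (q1 + q2)" using P Q1 Q2 by (simp add: ennreal_mult ennreal_plus)
    ultimately show ?thesis by simp
  qed
qed

text \<open>Ladyzhenskaya's trick: bounding \<open>U(s,t)\<^sup>2\<close> once along each coordinate line makes
  \<open>U\<^sup>4\<close> a product of a function of \<open>s\<close> and a function of \<open>t\<close>.\<close>
lemma nn_integral_power4_le_product:
  fixes U D1 D2 :: "real \<times> real \<Rightarrow> ennreal"
  assumes [measurable]: "U \<in> borel_measurable borel" "D1 \<in> borel_measurable borel"
      "D2 \<in> borel_measurable borel"
    and line1: "\<And>s t. U (s, t)^2 \<le> (\<integral>\<^sup>+s'. 2 * U (s', t) * D1 (s', t) \<partial>lborel)"
    and line2: "\<And>s t. U (s, t)^2 \<le> (\<integral>\<^sup>+t'. 2 * U (s, t') * D2 (s, t') \<partial>lborel)"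
  shows "(\<integral>\<^sup>+x. U x ^ 4 \<partial>lborel)
           \<le> (\<integral>\<^sup>+x. 2 * U x * D1 x \<partial>lborel) * (\<integral>\<^sup>+x. 2 * U x * D2 x \<partial>lborel)"
proof -
  define A1 where "A1 t = (\<integral>\<^sup>+s'. 2 * U (s', t) * D1 (s', t) \<partial>lborel)" for t
  define A2 where "A2 s = (\<integral>\<^sup>+t'. 2 * U (s, t') * D2 (s, t') \<partial>lborel)" for s
  have [measurable]: "A1 \<in> borel_measurable lborel" "A2 \<in> borel_measurable lborel"
    unfolding A1_def A2_def by measurable
  have "(\<integral>\<^sup>+x. U x ^ 4 \<partial>lborel) = (\<integral>\<^sup>+s. \<integral>\<^sup>+t. U (s, t) ^ 4 \<partial>lborel \<partial>lborel)"
    by (rule nn_integral_lborel_pair_fst) measurable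
  also have "\<dots> \<le> (\<integral>\<^sup>+s. \<integral>\<^sup>+t. A2 s * A1 t \<partial>lborel \<partial>lborel)"
  proof (intro nn_integral_mono)
    fix s t
    have "U (s, t) ^ 4 = U (s, t)^2 * U (s, t)^2" by (simp flip: power_add)
    also have "\<dots> \<le> A2 s * A1 t" unfolding A1_def A2_def by (intro mult_mono line1 line2) auto
    finally show "U (s, t) ^ 4 \<le> A2 s * A1 t" .
  qed
  also have "\<dots> = (\<integral>\<^sup>+s. A2 s \<partial>lborel) * (\<integral>\<^sup>+t. A1 t \<partial>lborel)"
    by (simp add: nn_integral_cmult nn_integral_multc)
  also have "(\<integral>\<^sup>+s. A2 s \<partial>lborel) = (\<integral>\<^sup>+x. 2 * U x * D2 x \<partial>lborel)"
    unfolding A2_def by (rule nn_integral_lborel_pair_fst[symmetric]) measurable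
  also have "(\<integral>\<^sup>+t. A1 t \<partial>lborel) = (\<integral>\<^sup>+x. 2 * U x * D1 x \<partial>lborel)"
    unfolding A1_def by (rule nn_integral_lborel_pair_snd[symmetric]) measurable
  finally show ?thesis by (simp only: mult.commute)
qed

lemma nn_integral_power4_le_mult_gradient:
  fixes U D1 D2 :: "real \<times> real \<Rightarrow> ennreal"
  assumes [measurable]: "U \<in> borel_measurable borel" "D1 \<in> borel_measurable borel"
      "D2 \<in> borel_measurable borel"
    and "\<And>s t. U (s, t)^2 \<le> (\<integral>\<^sup>+s'. 2 * U (s', t) * D1 (s', t) \<partial>lborel)"
    and "\<And>s t. U (s, t)^2 \<le> (\<integral>\<^sup>+t'. 2 * U (s, t') * D2 (s, t') \<partial>lborel)"
  shows "(\<integral>\<^sup>+x. U x ^ 4 \<partial>lborel)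
           \<le> 2 * ((\<integral>\<^sup>+x. U x ^ 2 \<partial>lborel) * ((\<integral>\<^sup>+x. D1 x ^ 2 \<partial>lborel) + (\<integral>\<^sup>+x. D2 x ^ 2 \<partial>lborel)))"
proof -
  have Cauchy_Schwarz: "(\<integral>\<^sup>+x. U x * D x \<partial>lborel)^2 \<le> (\<integral>\<^sup>+x. U x ^ 2 \<partial>lborel) * (\<integral>\<^sup>+x. D x ^ 2 \<partial>lborel)"
    if "D \<in> borel_measurable borel" for D
    using that by (intro Cauchy_Schwarz_nn_integral) (simp_all add: measurable_lborel1)
  have "(\<integral>\<^sup>+x. U x ^ 4 \<partial>lborel)
      \<le> (\<integral>\<^sup>+x. 2 * U x * D1 x \<partial>lborel) * (\<integral>\<^sup>+x. 2 * U x * D2 x \<partial>lborel)"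
    by (rule nn_integral_power4_le_product) fact+
  also have "\<dots> = 2 * (2 * (\<integral>\<^sup>+x. U x * D1 x \<partial>lborel) * (\<integral>\<^sup>+x. U x * D2 x \<partial>lborel))"
  proof -
    have "(\<integral>\<^sup>+x. 2 * U x * D x \<partial>lborel) = 2 * (\<integral>\<^sup>+x. U x * D x \<partial>lborel)"
      if [measurable]: "D \<in> borel_measurable borel" for D
      by (simp add: mult.assoc nn_integral_cmult)
    from this[OF assms(2)] this[OF assms(3)] show ?thesis by (simp add: mult_ac)
  qed
  also have "\<dots> \<le> 2 * ((\<integral>\<^sup>+x. U x ^ 2 \<partial>lborel) * ((\<integral>\<^sup>+x. D1 x ^ 2 \<partial>lborel) + (\<integral>\<^sup>+x. D2 x ^ 2 \<partial>lborel)))"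
    by (intro mult_left_mono two_mult_le_of_power2_le_ennreal Cauchy_Schwarz) simp_all
  finally show ?thesis .
qed

lemma ladyzhenskaya_2:
  fixes U D1 D2 :: "real \<times> real \<Rightarrow> ennreal"
  assumes [measurable]: "U \<in> borel_measurable borel" "D1 \<in> borel_measurable borel"
      "D2 \<in> borel_measurable borel"
    and "\<And>s t. U (s, t)^2 \<le> (\<integral>\<^sup>+s'. 2 * U (s', t) * D1 (s', t) \<partial>lborel)"
    and "\<And>s t. U (s, t)^2 \<le> (\<integral>\<^sup>+t'. 2 * U (s, t') * D2 (s, t') \<partial>lborel)"
  shows "(\<integral>\<^sup>+x. U x ^ 4 \<partial>lborel) \<le> 2 * (\<integral>\<^sup>+x. U x^2 + D1 x^2 + D2 x^2 \<partial>lborel)^2"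
proof -
  define N where "N = (\<integral>\<^sup>+x. U x^2 + D1 x^2 + D2 x^2 \<partial>lborel)"
  have "(\<integral>\<^sup>+x. U x ^ 2 \<partial>lborel) \<le> N"
    unfolding N_def by (intro nn_integral_mono) (simp add: add.assoc add_increasing2)
  moreover have "(\<integral>\<^sup>+x. D1 x ^ 2 \<partial>lborel) + (\<integral>\<^sup>+x. D2 x ^ 2 \<partial>lborel) \<le> N"
  proof -
    have "(\<integral>\<^sup>+x. D1 x ^ 2 \<partial>lborel) + (\<integral>\<^sup>+x. D2 x ^ 2 \<partial>lborel) = (\<integral>\<^sup>+x. D1 x ^ 2 + D2 x ^ 2 \<partial>lborel)"
      by (simp add: nn_integral_add)
    also have "\<dots> \<le> N"
      unfolding N_def by (intro nn_integral_mono) (simp add: add.assoc add_increasing)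
    finally show ?thesis .
  qed
  ultimately have "2 * ((\<integral>\<^sup>+x. U x ^ 2 \<partial>lborel) * ((\<integral>\<^sup>+x. D1 x ^ 2 \<partial>lborel) + (\<integral>\<^sup>+x. D2 x ^ 2 \<partial>lborel)))
      \<le> 2 * N^2"
    unfolding power2_eq_square by (intro mult_left_mono mult_mono) simp_all
  with nn_integral_power4_le_mult_gradient[OF assms] show ?thesis
    unfolding N_def by (rule order.trans)
qed

lemma nn_integral_two_mult_le:
  "(\<integral>\<^sup>+x. 2 * U x * D x \<partial>M) \<le> (\<integral>\<^sup>+x. U x^2 + D x^2 + R x \<partial>M)"
proof (rule nn_integral_mono)
  fix x
  have "2 * U x * D x \<le> U x^2 + D x^2" by (rule sum_of_squares_ge_ennreal)
  also have "\<dots> \<le> U x^2 + D x^2 + R x" by (rule add_increasing2) auto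
  finally show "2 * U x * D x \<le> U x^2 + D x^2 + R x" .
qed

lemma ladyzhenskaya_3:
  fixes U D1 D2 D3 :: "real \<times> real \<times> real \<Rightarrow> ennreal"
  assumes [measurable]: "U \<in> borel_measurable borel" "D1 \<in> borel_measurable borel"
      "D2 \<in> borel_measurable borel" "D3 \<in> borel_measurable borel"
    and line1: "\<And>s t r. U (s, t, r)^2 \<le> (\<integral>\<^sup>+s'. 2 * U (s', t, r) * D1 (s', t, r) \<partial>lborel)"
    and line2: "\<And>s t r. U (s, t, r)^2 \<le> (\<integral>\<^sup>+t'. 2 * U (s, t', r) * D2 (s, t', r) \<partial>lborel)"
    and line3: "\<And>s t r. U (s, t, r)^2 \<le> (\<integral>\<^sup>+r'. 2 * U (s, t, r') * D3 (s, t, r') \<partial>lborel)"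
  shows "(\<integral>\<^sup>+x. U x ^ 4 \<partial>lborel) \<le> 2 * (\<integral>\<^sup>+x. U x^2 + D1 x^2 + D2 x^2 + D3 x^2 \<partial>lborel)^2"
proof -
  define N where "N = (\<integral>\<^sup>+x. U x^2 + D1 x^2 + D2 x^2 + D3 x^2 \<partial>lborel)"
  define sl where "sl F r x = F (fst x, snd x, r)"
    for F :: "real \<times> real \<times> real \<Rightarrow> ennreal" and r and x :: "real \<times> real"
  define Q where "Q F r = (\<integral>\<^sup>+s. \<integral>\<^sup>+t. F (s, t, r)^2 \<partial>lborel \<partial>lborel)"
    for F :: "real \<times> real \<times> real \<Rightarrow> ennreal" and r :: real
  have [measurable]: "sl F r \<in> borel_measurable borel" "Q F \<in> borel_measurable borel"
    if [measurable]: "F \<in> borel_measurable borel" for F r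
    unfolding sl_def Q_def by (rule borel_measurable_slice[OF that]) measurable
  have Q_slice: "Q F r = (\<integral>\<^sup>+x. sl F r x ^ 2 \<partial>lborel)" if "F \<in> borel_measurable borel" for F r
    unfolding Q_def sl_def using that by (intro nn_integral_lborel_slice) measurable
  have Q_integral: "(\<integral>\<^sup>+r. Q F r \<partial>lborel) = (\<integral>\<^sup>+x. F x ^ 2 \<partial>lborel)"
    if "F \<in> borel_measurable borel" for F
    unfolding Q_def using that by (intro nn_integral_lborel_triple_r_s_t[symmetric]) measurable
  have QU_le: "Q U r \<le> N" for r
  proof -
    have "Q U r \<le> (\<integral>\<^sup>+s. \<integral>\<^sup>+t. \<integral>\<^sup>+r'. 2 * U (s, t, r') * D3 (s, t, r') \<partial>lborel \<partial>lborel \<partial>lborel)"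
      unfolding Q_def by (intro nn_integral_mono line3)
    also have "\<dots> = (\<integral>\<^sup>+x. 2 * U x * D3 x \<partial>lborel)"
      by (rule nn_integral_lborel_triple_s_t_r[symmetric]) measurable
    also have "\<dots> \<le> N"
      using nn_integral_two_mult_le[where U=U and D=D3 and R="\<lambda>x. D1 x^2 + D2 x^2"]
      unfolding N_def by (simp add: ac_simps)
    finally show ?thesis .
  qed
  have slice: "(\<integral>\<^sup>+x. sl U r x ^ 4 \<partial>lborel) \<le> 2 * (N * (Q D1 r + Q D2 r))" for r
  proof -
    have "sl U r (s, t)^2 \<le> (\<integral>\<^sup>+s'. 2 * sl U r (s', t) * sl D1 r (s', t) \<partial>lborel)"
      and "sl U r (s, t)^2 \<le> (\<integral>\<^sup>+t'. 2 * sl U r (s, t') * sl D2 r (s, t') \<partial>lborel)" for s t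
      unfolding sl_def using line1 line2 by simp_all
    then have "(\<integral>\<^sup>+x. sl U r x ^ 4 \<partial>lborel) \<le> 2 * (Q U r * (Q D1 r + Q D2 r))"
      unfolding Q_slice[OF assms(1)] Q_slice[OF assms(2)] Q_slice[OF assms(3)]
      by (intro nn_integral_power4_le_mult_gradient) measurable
    also have "\<dots> \<le> 2 * (N * (Q D1 r + Q D2 r))"
      by (intro mult_left_mono mult_right_mono QU_le) simp_all
    finally show ?thesis .
  qed
  have "(\<integral>\<^sup>+x. U x ^ 4 \<partial>lborel) = (\<integral>\<^sup>+r. \<integral>\<^sup>+s. \<integral>\<^sup>+t. U (s, t, r) ^ 4 \<partial>lborel \<partial>lborel \<partial>lborel)"
    by (rule nn_integral_lborel_triple_r_s_t) measurable
  also have "\<dots> = (\<integral>\<^sup>+r. \<integral>\<^sup>+x. sl U r x ^ 4 \<partial>lborel \<partial>lborel)"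
    unfolding sl_def by (intro nn_integral_cong nn_integral_lborel_slice) measurable
  also have "\<dots> \<le> (\<integral>\<^sup>+r. 2 * (N * (Q D1 r + Q D2 r)) \<partial>lborel)"
    by (intro nn_integral_mono slice)
  also have "\<dots> = 2 * (N * (\<integral>\<^sup>+x. D1 x ^ 2 + D2 x ^ 2 \<partial>lborel))"
    by (simp add: nn_integral_cmult nn_integral_add Q_integral)
  also have "\<dots> \<le> 2 * (N * N)"
    unfolding N_def by (intro mult_left_mono nn_integral_mono) (simp_all add: add.assoc add_increasing add_increasing2)
  finally show ?thesis unfolding N_def by (simp add: power2_eq_square)
qed

lemma has_vector_derivative_along_line:
  fixes u :: "'a::euclidean_space \<Rightarrow> complex"
  assumes "u differentiable (at (x + (\<sigma> - c) *\<^sub>R b))"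
  shows "((\<lambda>\<sigma>. u (x + (\<sigma> - c) *\<^sub>R b)) has_vector_derivative dderiv b u (x + (\<sigma> - c) *\<^sub>R b)) (at \<sigma>)"
proof -
  let ?y = "x + (\<sigma> - c) *\<^sub>R b"
  have du: "(u has_derivative frechet_derivative u (at ?y)) (at ?y)"
    using assms frechet_derivative_works by blast
  have "((\<lambda>\<sigma>::real. x + (\<sigma> - c) *\<^sub>R b) has_derivative (\<lambda>t. t *\<^sub>R b)) (at \<sigma>)"
    by (auto intro!: derivative_eq_intros)
  from diff_chain_at[OF this du]
  have "((\<lambda>\<sigma>. u (x + (\<sigma> - c) *\<^sub>R b)) has_derivative (\<lambda>t. frechet_derivative u (at ?y) (t *\<^sub>R b))) (at \<sigma>)"
    by (simp add: comp_def)
  moreover have "frechet_derivative u (at ?y) (t *\<^sub>R b) = t *\<^sub>R dderiv b u ?y" for t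
    using has_derivative_bounded_linear[OF du] unfolding dderiv_def
    by (simp add: bounded_linear.linear linear_scale)
  ultimately show ?thesis
    unfolding has_vector_derivative_def by simp
qed

lemma norm_power2_le_nn_integral_deriv:
  fixes h h' :: "real \<Rightarrow> complex"
  assumes deriv: "\<And>\<sigma>. (h has_vector_derivative h' \<sigma>) (at \<sigma>)"
    and cont: "continuous_on UNIV h'" and "h a = 0" and "a \<le> c"
  shows "ennreal (cmod (h c))^2 \<le> (\<integral>\<^sup>+\<sigma>. 2 * ennreal (cmod (h \<sigma>)) * ennreal (cmod (h' \<sigma>)) \<partial>lborel)"
proof -
  define F where "F \<sigma> = 2 * cmod (h \<sigma>) * cmod (h' \<sigma>)" for \<sigma>
  have "continuous_on UNIV h"
    using deriv by (meson continuous_at_imp_continuous_on has_vector_derivative_continuous)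
  then have "continuous_on {a..c} F"
    unfolding F_def using continuous_on_subset[OF cont] continuous_on_subset
    by (intro continuous_intros) blast+
  then have F_int: "F integrable_on {a..c}" by (rule integrable_continuous_interval)
  have "((\<lambda>\<sigma>. h \<sigma> * cnj (h' \<sigma>) + h' \<sigma> * cnj (h \<sigma>)) has_integral
      (h c * cnj (h c) - h a * cnj (h a))) {a..c}"
    using deriv \<open>a \<le> c\<close>
    by (intro fundamental_theorem_of_calculus)
      (auto intro!: derivative_eq_intros intro: has_vector_derivative_at_within)
  then have "(cmod (h c))^2 = norm (integral {a..c} (\<lambda>\<sigma>. h \<sigma> * cnj (h' \<sigma>) + h' \<sigma> * cnj (h \<sigma>)))"
    using \<open>h a = 0\<close> by (simp add: integral_unique norm_mult power2_eq_square)
  also have "\<dots> \<le> integral {a..c} F"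
    using \<open>(_ has_integral _) {a..c}\<close> F_int
    by (intro integral_norm_bound_integral)
      (auto simp: F_def norm_mult intro: order.trans[OF norm_triangle_ineq])
  finally have le: "(cmod (h c))^2 \<le> integral {a..c} F" .
  have "ennreal (integral {a..c} F) = (\<integral>\<^sup>+\<sigma>. ennreal (F \<sigma>) * indicator {a..c} \<sigma> \<partial>lborel)"
    using F_int by (intro nn_integral_has_integral_lebesgue'[symmetric])
      (auto simp: F_def[abs_def] integrable_integral)
  also have "\<dots> \<le> (\<integral>\<^sup>+\<sigma>. ennreal (F \<sigma>) \<partial>lborel)"
    by (intro nn_integral_mono) (simp add: indicator_def)
  finally have "ennreal ((cmod (h c))^2) \<le> (\<integral>\<^sup>+\<sigma>. ennreal (F \<sigma>) \<partial>lborel)"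
    using le by (meson ennreal_leI order_trans)
  then show ?thesis by (simp add: F_def ennreal_power ennreal_mult)
qed

lemma bounded_support_vanishes_on_line:
  fixes u :: "'a::euclidean_space \<Rightarrow> 'b::zero"
  assumes "bounded {y. u y \<noteq> 0}" and b: "norm b = 1"
  obtains a where "a \<le> c" "u (x + (a - c) *\<^sub>R b) = 0"
proof -
  obtain R where R: "\<And>y. u y \<noteq> 0 \<Longrightarrow> norm y \<le> R" using assms(1) unfolding bounded_iff by auto
  define a where "a = c - norm x - \<bar>R\<bar> - 1"
  have "norm ((a - c) *\<^sub>R b) \<le> norm (x + (a - c) *\<^sub>R b) + norm x"
    by (metis add.commute add_diff_cancel_left' norm_triangle_ineq4)
  then have "norm x + norm (x + (a - c) *\<^sub>R b) \<ge> \<bar>a - c\<bar>"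
    using b by simp
  then have "u (x + (a - c) *\<^sub>R b) = 0"
    using R[of "x + (a - c) *\<^sub>R b"] unfolding a_def by force
  moreover have "a \<le> c" unfolding a_def using norm_ge_zero[of x] by linarith
  ultimately show ?thesis using that by blast
qed

text \<open>The one-dimensional estimate behind Ladyzhenskaya's inequality: along any coordinate line,
  \<open>\<bar>u(x)\<bar>\<^sup>2\<close> is bounded by the integral of \<open>(\<bar>u\<bar>\<^sup>2)' = 2 Re (u \<partial>\<^sub>b u\<^sup>*)\<close>.\<close>
lemma norm_power2_le_line_integral:
  fixes u :: "'a::euclidean_space \<Rightarrow> complex"
  assumes diff: "\<And>y. u differentiable (at y)"
    and cont: "continuous_on UNIV (dderiv b u)"
    and supp: "bounded {y. u y \<noteq> 0}"
    and b: "b \<in> Basis"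
    and line: "\<And>\<sigma>. \<gamma> \<sigma> = x + (\<sigma> - c) *\<^sub>R b"
  shows "ennreal (cmod (u x))^2
           \<le> (\<integral>\<^sup>+\<sigma>. 2 * ennreal (cmod (u (\<gamma> \<sigma>))) * ennreal (cmod (dderiv b u (\<gamma> \<sigma>))) \<partial>lborel)"
proof -
  obtain a where "a \<le> c" and "u (\<gamma> a) = 0"
    using bounded_support_vanishes_on_line[OF supp] b line by (metis norm_Basis)
  have "ennreal (cmod (u (\<gamma> c)))^2
      \<le> (\<integral>\<^sup>+\<sigma>. 2 * ennreal (cmod (u (\<gamma> \<sigma>))) * ennreal (cmod (dderiv b u (\<gamma> \<sigma>))) \<partial>lborel)"
  proof (rule norm_power2_le_nn_integral_deriv[where h="\<lambda>\<sigma>. u (\<gamma> \<sigma>)"])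
    show "((\<lambda>\<sigma>. u (\<gamma> \<sigma>)) has_vector_derivative dderiv b u (\<gamma> \<sigma>)) (at \<sigma>)" for \<sigma>
      unfolding line by (rule has_vector_derivative_along_line[OF diff])
    show "continuous_on UNIV (\<lambda>\<sigma>. dderiv b u (\<gamma> \<sigma>))"
      unfolding line by (intro continuous_on_compose2[OF cont]) (auto intro!: continuous_intros)
  qed fact+
  then show ?thesis using line[of c] by simp
qed

lemma emeasure_lborel_Times:
  fixes A :: "'a::euclidean_space set" and B :: "'b::euclidean_space set"
  assumes "A \<in> sets borel" "B \<in> sets borel"
  shows "emeasure lborel (A \<times> B) = emeasure lborel A * emeasure lborel B"
  using lborel.emeasure_pair_measure_Times[of A lborel B] assms by (simp add: lborel_prod)

lemma lborel_eq_distr_coordinates_2: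
  fixes b1 b2 :: "'a::euclidean_space"
  assumes B: "Basis = {b1, b2}" and d: "b1 \<noteq> b2"
  shows "distr lborel borel (\<lambda>p::real \<times> real. fst p *\<^sub>R b1 + snd p *\<^sub>R b2) = (lborel :: 'a measure)"
proof (rule lborel_eqI[symmetric])
  let ?T = "\<lambda>p::real \<times> real. fst p *\<^sub>R b1 + snd p *\<^sub>R b2"
  have bb: "b1 \<in> Basis" "b2 \<in> Basis" using B by auto
  have coord: "?T p \<bullet> b1 = fst p" "?T p \<bullet> b2 = snd p" for p
    using bb d by (simp_all add: inner_add_left inner_Basis)
  fix l u :: 'a
  assume lu: "\<And>b. b \<in> Basis \<Longrightarrow> l \<bullet> b \<le> u \<bullet> b"
  have "?T -` box l u \<inter> space lborel = {l \<bullet> b1<..<u \<bullet> b1} \<times> {l \<bullet> b2<..<u \<bullet> b2}"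
    by (auto simp: box_def B coord)
  moreover have "?T \<in> borel_measurable borel"
    by (intro borel_measurable_continuous_onI continuous_intros)
  ultimately have "emeasure (distr lborel borel ?T) (box l u) = ennreal ((u - l) \<bullet> b1) * ennreal ((u - l) \<bullet> b2)"
    using lu bb by (simp add: emeasure_distr emeasure_lborel_Times inner_diff_left)
  also have "\<dots> = (\<Prod>b\<in>Basis. (u - l) \<bullet> b)"
    using lu bb d by (simp add: B ennreal_mult' inner_diff_left)
  finally show "emeasure (distr lborel borel ?T) (box l u) = (\<Prod>b\<in>Basis. (u - l) \<bullet> b)" .
qed simp

lemma lborel_eq_distr_coordinates_3:
  fixes b1 b2 b3 :: "'a::euclidean_space"
  assumes B: "Basis = {b1, b2, b3}" and d: "b1 \<noteq> b2" "b1 \<noteq> b3" "b2 \<noteq> b3"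
  shows "distr lborel borel (\<lambda>p::real \<times> real \<times> real. fst p *\<^sub>R b1 + fst (snd p) *\<^sub>R b2 + snd (snd p) *\<^sub>R b3)
           = (lborel :: 'a measure)"
proof (rule lborel_eqI[symmetric])
  let ?T = "\<lambda>p::real \<times> real \<times> real. fst p *\<^sub>R b1 + fst (snd p) *\<^sub>R b2 + snd (snd p) *\<^sub>R b3"
  have bb: "b1 \<in> Basis" "b2 \<in> Basis" "b3 \<in> Basis" using B by auto
  have coord: "?T p \<bullet> b1 = fst p" "?T p \<bullet> b2 = fst (snd p)" "?T p \<bullet> b3 = snd (snd p)" for p
    using bb d d[symmetric] by (simp_all add: inner_add_left inner_Basis)
  fix l u :: 'a
  assume lu: "\<And>b. b \<in> Basis \<Longrightarrow> l \<bullet> b \<le> u \<bullet> b"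
  have "?T -` box l u \<inter> space lborel
      = {l \<bullet> b1<..<u \<bullet> b1} \<times> {l \<bullet> b2<..<u \<bullet> b2} \<times> {l \<bullet> b3<..<u \<bullet> b3}"
    by (auto simp: box_def B coord)
  moreover have "?T \<in> borel_measurable borel"
    by (intro borel_measurable_continuous_onI continuous_intros)
  ultimately have "emeasure (distr lborel borel ?T) (box l u)
      = ennreal ((u - l) \<bullet> b1) * (ennreal ((u - l) \<bullet> b2) * ennreal ((u - l) \<bullet> b3))"
    using lu bb by (simp add: emeasure_distr emeasure_lborel_Times borel_open open_Times inner_diff_left)
  also have "\<dots> = (\<Prod>b\<in>Basis. (u - l) \<bullet> b)"
    using lu bb d by (simp add: B ennreal_mult' inner_diff_left)
  finally show "emeasure (distr lborel borel ?T) (box l u) = (\<Prod>b\<in>Basis. (u - l) \<bullet> b)" .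
qed simp

lemma nn_integral_lborel_change_coordinates:
  assumes "distr lborel borel T = lborel" "T \<in> borel_measurable borel" "G \<in> borel_measurable borel"
  shows "(\<integral>\<^sup>+x. G x \<partial>lborel) = (\<integral>\<^sup>+p. G (T p) \<partial>lborel)"
proof -
  have "(\<integral>\<^sup>+x. G x \<partial>lborel) = (\<integral>\<^sup>+x. G x \<partial>distr lborel borel T)"
    using assms(1) by simp
  also have "\<dots> = (\<integral>\<^sup>+p. G (T p) \<partial>lborel)"
    using assms(2,3) by (intro nn_integral_distr) simp_all
  finally show ?thesis .
qed

lemma ladyzhenskaya_euclidean_2:
  fixes u :: "'a::euclidean_space \<Rightarrow> complex"
  assumes dim: "DIM('a) = 2"
    and diff: "\<And>y. u differentiable (at y)"
    and cont: "\<And>b. b \<in> Basis \<Longrightarrow> continuous_on UNIV (dderiv b u)"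
    and supp: "bounded {y. u y \<noteq> 0}"
  shows "(\<integral>\<^sup>+x. ennreal ((cmod (u x))^4) \<partial>lborel)
           \<le> 2 * (\<integral>\<^sup>+x. ennreal ((cmod (u x))^2 + (\<Sum>b\<in>Basis. (cmod (dderiv b u x))^2)) \<partial>lborel)^2"
proof -
  obtain b1 b2 where B: "(Basis::'a set) = {b1, b2}" and d: "b1 \<noteq> b2"
    using dim by (metis card_2_iff)
  have bb: "b1 \<in> Basis" "b2 \<in> Basis" using B by auto
  define T where "T p = fst p *\<^sub>R b1 + snd p *\<^sub>R b2" for p :: "real \<times> real"
  have T [measurable]: "T \<in> borel_measurable borel"
    unfolding T_def by (intro borel_measurable_continuous_onI continuous_intros)
  have [measurable]: "u \<in> borel_measurable borel"
    using diff by (auto intro!: borel_measurable_continuous_onI differentiable_imp_continuous_on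
        simp: differentiable_on_def)
  have [measurable]: "dderiv b u \<in> borel_measurable borel" if "b \<in> Basis" for b
    using cont[OF that] by (rule borel_measurable_continuous_onI)
  define U where "U p = ennreal (cmod (u (T p)))" for p
  define Du where "Du b p = ennreal (cmod (dderiv b u (T p)))" for b p
  have main: "(\<integral>\<^sup>+p. U p ^ 4 \<partial>lborel) \<le> 2 * (\<integral>\<^sup>+p. U p^2 + Du b1 p^2 + Du b2 p^2 \<partial>lborel)^2"
  proof (rule ladyzhenskaya_2)
    show "U (s, t)^2 \<le> (\<integral>\<^sup>+s'. 2 * U (s', t) * Du b1 (s', t) \<partial>lborel)" for s t
      unfolding U_def Du_def
      by (rule norm_power2_le_line_integral[where c=s, OF diff cont[OF bb(1)] supp bb(1)])
        (simp add: T_def algebra_simps)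
    show "U (s, t)^2 \<le> (\<integral>\<^sup>+t'. 2 * U (s, t') * Du b2 (s, t') \<partial>lborel)" for s t
      unfolding U_def Du_def
      by (rule norm_power2_le_line_integral[where c=t, OF diff cont[OF bb(2)] supp bb(2)])
        (simp add: T_def algebra_simps)
  qed (use bb in \<open>unfold U_def Du_def, measurable\<close>)
  have "distr lborel borel T = lborel"
    unfolding T_def[abs_def] by (rule lborel_eq_distr_coordinates_2[OF B d])
  note coordinates = nn_integral_lborel_change_coordinates[OF this T]
  have "(\<integral>\<^sup>+x. ennreal ((cmod (u x))^4) \<partial>lborel) = (\<integral>\<^sup>+p. U p ^ 4 \<partial>lborel)"
    by (subst coordinates) (measurable, simp add: U_def ennreal_power)
  moreover have "(\<integral>\<^sup>+x. ennreal ((cmod (u x))^2 + (\<Sum>b\<in>Basis. (cmod (dderiv b u x))^2)) \<partial>lborel)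
      = (\<integral>\<^sup>+p. U p^2 + Du b1 p^2 + Du b2 p^2 \<partial>lborel)"
    by (subst coordinates) (use bb in \<open>measurable, simp add: B d U_def Du_def ennreal_power ennreal_plus add.assoc\<close>)
  ultimately show ?thesis using main by simp
qed

lemma ladyzhenskaya_euclidean_3:
  fixes u :: "'a::euclidean_space \<Rightarrow> complex"
  assumes dim: "DIM('a) = 3"
    and diff: "\<And>y. u differentiable (at y)"
    and cont: "\<And>b. b \<in> Basis \<Longrightarrow> continuous_on UNIV (dderiv b u)"
    and supp: "bounded {y. u y \<noteq> 0}"
  shows "(\<integral>\<^sup>+x. ennreal ((cmod (u x))^4) \<partial>lborel)
           \<le> 2 * (\<integral>\<^sup>+x. ennreal ((cmod (u x))^2 + (\<Sum>b\<in>Basis. (cmod (dderiv b u x))^2)) \<partial>lborel)^2"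
proof -
  obtain b1 b2 b3 where B: "(Basis::'a set) = {b1, b2, b3}" and d: "b1 \<noteq> b2" "b1 \<noteq> b3" "b2 \<noteq> b3"
    using dim by (metis card_3_iff)
  have bb: "b1 \<in> Basis" "b2 \<in> Basis" "b3 \<in> Basis" using B by auto
  define T where "T p = fst p *\<^sub>R b1 + fst (snd p) *\<^sub>R b2 + snd (snd p) *\<^sub>R b3"
    for p :: "real \<times> real \<times> real"
  have T [measurable]: "T \<in> borel_measurable borel"
    unfolding T_def by (intro borel_measurable_continuous_onI continuous_intros)
  have [measurable]: "u \<in> borel_measurable borel"
    using diff by (auto intro!: borel_measurable_continuous_onI differentiable_imp_continuous_on
        simp: differentiable_on_def)
  have [measurable]: "dderiv b u \<in> borel_measurable borel" if "b \<in> Basis" for b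
    using cont[OF that] by (rule borel_measurable_continuous_onI)
  define U where "U p = ennreal (cmod (u (T p)))" for p
  define Du where "Du b p = ennreal (cmod (dderiv b u (T p)))" for b p
  have main: "(\<integral>\<^sup>+p. U p ^ 4 \<partial>lborel) \<le> 2 * (\<integral>\<^sup>+p. U p^2 + Du b1 p^2 + Du b2 p^2 + Du b3 p^2 \<partial>lborel)^2"
  proof (rule ladyzhenskaya_3)
    show "U (s, t, r)^2 \<le> (\<integral>\<^sup>+s'. 2 * U (s', t, r) * Du b1 (s', t, r) \<partial>lborel)" for s t r
      unfolding U_def Du_def
      by (rule norm_power2_le_line_integral[where c=s, OF diff cont[OF bb(1)] supp bb(1)])
        (simp add: T_def algebra_simps)
    show "U (s, t, r)^2 \<le> (\<integral>\<^sup>+t'. 2 * U (s, t', r) * Du b2 (s, t', r) \<partial>lborel)" for s t r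
      unfolding U_def Du_def
      by (rule norm_power2_le_line_integral[where c=t, OF diff cont[OF bb(2)] supp bb(2)])
        (simp add: T_def algebra_simps)
    show "U (s, t, r)^2 \<le> (\<integral>\<^sup>+r'. 2 * U (s, t, r') * Du b3 (s, t, r') \<partial>lborel)" for s t r
      unfolding U_def Du_def
      by (rule norm_power2_le_line_integral[where c=r, OF diff cont[OF bb(3)] supp bb(3)])
        (simp add: T_def algebra_simps)
  qed (use bb in \<open>unfold U_def Du_def, measurable\<close>)
  have "distr lborel borel T = lborel"
    unfolding T_def[abs_def] by (rule lborel_eq_distr_coordinates_3[OF B d])
  note coordinates = nn_integral_lborel_change_coordinates[OF this T]
  have "(\<integral>\<^sup>+x. ennreal ((cmod (u x))^4) \<partial>lborel) = (\<integral>\<^sup>+p. U p ^ 4 \<partial>lborel)"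
    by (subst coordinates) (measurable, simp add: U_def ennreal_power)
  moreover have "(\<integral>\<^sup>+x. ennreal ((cmod (u x))^2 + (\<Sum>b\<in>Basis. (cmod (dderiv b u x))^2)) \<partial>lborel)
      = (\<integral>\<^sup>+p. U p^2 + Du b1 p^2 + Du b2 p^2 + Du b3 p^2 \<partial>lborel)"
    by (subst coordinates) (use bb in \<open>measurable, simp add: B d U_def Du_def ennreal_power ennreal_plus add.assoc\<close>)
  ultimately show ?thesis using main by simp
qed

lemma ladyzhenskaya_euclidean:
  fixes u :: "'a::euclidean_space \<Rightarrow> complex"
  assumes "DIM('a) = 2 \<or> DIM('a) = 3"
    and "\<And>y. u differentiable (at y)"
    and "\<And>b. b \<in> Basis \<Longrightarrow> continuous_on UNIV (dderiv b u)"
    and "bounded {y. u y \<noteq> 0}"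
  shows "(\<integral>\<^sup>+x. ennreal ((cmod (u x))^4) \<partial>lborel)
           \<le> 2 * (\<integral>\<^sup>+x. ennreal ((cmod (u x))^2 + (\<Sum>b\<in>Basis. (cmod (dderiv b u x))^2)) \<partial>lborel)^2"
  using assms ladyzhenskaya_euclidean_2 ladyzhenskaya_euclidean_3 by blast

section \<open>Test functions\<close>

lemma dderiv_eq: "(f has_derivative f') (at x) \<Longrightarrow> dderiv b f x = f' b"
  unfolding dderiv_def using frechet_derivative_at by metis

lemma dderiv_add:
  assumes "\<And>x. f differentiable (at x)" "\<And>x. g differentiable (at x)"
  shows "dderiv b (\<lambda>y. f y + g y) = (\<lambda>x. dderiv b f x + dderiv b g x)"
proof
  fix x
  from assms have "(f has_derivative frechet_derivative f (at x)) (at x)"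
    "(g has_derivative frechet_derivative g (at x)) (at x)"
    by (simp_all add: frechet_derivative_works)
  from dderiv_eq[OF has_derivative_add[OF this]]
  show "dderiv b (\<lambda>y. f y + g y) x = dderiv b f x + dderiv b g x"
    unfolding dderiv_def by simp
qed

lemma dderiv_mult:
  assumes "\<And>x. f differentiable (at x)" "\<And>x. g differentiable (at x)"
  shows "dderiv b (\<lambda>y. f y * g y) = (\<lambda>x. dderiv b f x * g x + f x * dderiv b g x)"
proof
  fix x
  from assms have "(f has_derivative frechet_derivative f (at x)) (at x)"
    "(g has_derivative frechet_derivative g (at x)) (at x)"
    by (simp_all add: frechet_derivative_works)
  from dderiv_eq[OF has_derivative_mult[OF this]]
  show "dderiv b (\<lambda>y. f y * g y) x = dderiv b f x * g x + f x * dderiv b g x"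
    unfolding dderiv_def by (simp add: algebra_simps)
qed

lemma dderiv_cnj:
  assumes "\<And>x. f differentiable (at x)"
  shows "dderiv b (\<lambda>y. cnj (f y)) = (\<lambda>x. cnj (dderiv b f x))"
proof
  fix x
  from assms have "(f has_derivative frechet_derivative f (at x)) (at x)"
    by (simp add: frechet_derivative_works)
  from dderiv_eq[OF has_derivative_cnj[OF this]]
  show "dderiv b (\<lambda>y. cnj (f y)) x = cnj (dderiv b f x)"
    unfolding dderiv_def by simp
qed

lemma has_derivative_coordinate:
  "((\<lambda>y. complex_of_real (y \<bullet> e)) has_derivative (\<lambda>h. complex_of_real (h \<bullet> e))) (at x)"
  by (auto intro!: derivative_eq_intros)

lemma dderiv_coordinate: "dderiv b (\<lambda>y. complex_of_real (y \<bullet> e)) = (\<lambda>x. complex_of_real (b \<bullet> e))"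
  using dderiv_eq[OF has_derivative_coordinate] by blast

lemma dderiv_const: "dderiv b (\<lambda>y::'a::euclidean_space. c::complex) = (\<lambda>x. 0)"
  using dderiv_eq[OF has_derivative_const] by blast

definition smooth_upto :: "nat \<Rightarrow> ('a::euclidean_space \<Rightarrow> complex) \<Rightarrow> bool" where
  "smooth_upto n f \<longleftrightarrow>
     (\<forall>bs. set bs \<subseteq> Basis \<longrightarrow> length bs \<le> n \<longrightarrow> (\<forall>x. fold dderiv bs f differentiable (at x)))"

lemma smooth_fun_iff_smooth_upto: "smooth_fun f \<longleftrightarrow> (\<forall>n. smooth_upto n f)"
  unfolding smooth_fun_def smooth_upto_def by blast

lemma smooth_upto_0: "smooth_upto 0 f \<longleftrightarrow> (\<forall>x. f differentiable (at x))"
  unfolding smooth_upto_def by auto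

lemma smooth_upto_Suc:
  "smooth_upto (Suc n) f \<longleftrightarrow> (\<forall>x. f differentiable (at x)) \<and> (\<forall>b\<in>Basis. smooth_upto n (dderiv b f))"
proof
  assume a: "smooth_upto (Suc n) f"
  have "\<forall>x. f differentiable (at x)" using a unfolding smooth_upto_def
    by (metis empty_set empty_subsetI fold_Nil id_apply le0 list.size(3))
  moreover have "smooth_upto n (dderiv b f)" if b: "b \<in> Basis" for b
    unfolding smooth_upto_def
  proof (intro allI impI)
    fix bs :: "'a list" and x assume "set bs \<subseteq> Basis" "length bs \<le> n"
    then have "set (b#bs) \<subseteq> Basis" "length (b#bs) \<le> Suc n" using b by auto
    then have "fold dderiv (b#bs) f differentiable (at x)" using a unfolding smooth_upto_def by blast
    then show "fold dderiv bs (dderiv b f) differentiable (at x)" by simp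
  qed
  ultimately show "(\<forall>x. f differentiable (at x)) \<and> (\<forall>b\<in>Basis. smooth_upto n (dderiv b f))" by blast
next
  assume a: "(\<forall>x. f differentiable (at x)) \<and> (\<forall>b\<in>Basis. smooth_upto n (dderiv b f))"
  show "smooth_upto (Suc n) f" unfolding smooth_upto_def
  proof (intro allI impI)
    fix bs :: "'a list" and x assume bs: "set bs \<subseteq> Basis" "length bs \<le> Suc n"
    show "fold dderiv bs f differentiable (at x)"
    proof (cases bs)
      case Nil then show ?thesis using a by simp
    next
      case (Cons b cs)
      then have "b \<in> Basis" "set cs \<subseteq> Basis" "length cs \<le> n" using bs by auto
      then have "fold dderiv cs (dderiv b f) differentiable (at x)" using a unfolding smooth_upto_def by blast
      then show ?thesis using Cons by simp
    qed
  qed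
qed

lemma smooth_upto_SucD: "smooth_upto (Suc n) f \<Longrightarrow> smooth_upto n f"
  unfolding smooth_upto_def by auto

lemma smooth_upto_differentiable: "smooth_upto n f \<Longrightarrow> f differentiable (at x)"
  by (cases n) (auto simp: smooth_upto_Suc smooth_upto_0)

lemma smooth_upto_const: "smooth_upto n (\<lambda>y. c)"
  by (induction n arbitrary: c) (simp_all add: smooth_upto_0 smooth_upto_Suc dderiv_const)

lemma smooth_upto_coordinate: "smooth_upto n (\<lambda>y. complex_of_real (y \<bullet> e))"
  by (cases n) (auto simp: smooth_upto_0 smooth_upto_Suc dderiv_coordinate smooth_upto_const
      intro: differentiableI[OF has_derivative_coordinate])

lemma smooth_upto_add: "smooth_upto n f \<Longrightarrow> smooth_upto n g \<Longrightarrow> smooth_upto n (\<lambda>y. f y + g y)"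
proof (induction n arbitrary: f g)
  case 0 then show ?case by (auto simp: smooth_upto_0)
next
  case (Suc n)
  have df: "\<And>x. f differentiable (at x)" and dg: "\<And>x. g differentiable (at x)"
    using Suc.prems by (auto simp: smooth_upto_Suc)
  show ?case unfolding smooth_upto_Suc
  proof (intro conjI ballI allI)
    fix x show "(\<lambda>y. f y + g y) differentiable (at x)" using df dg by auto
  next
    fix b :: 'a assume b: "b \<in> Basis"
    show "smooth_upto n (dderiv b (\<lambda>y. f y + g y))"
      unfolding dderiv_add[OF df dg] using Suc.IH Suc.prems b by (auto simp: smooth_upto_Suc)
  qed
qed

lemma smooth_upto_mult: "smooth_upto n f \<Longrightarrow> smooth_upto n g \<Longrightarrow> smooth_upto n (\<lambda>y. f y * g y)"
proof (induction n arbitrary: f g)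
  case 0 then show ?case by (auto simp: smooth_upto_0)
next
  case (Suc n)
  have df: "\<And>x. f differentiable (at x)" and dg: "\<And>x. g differentiable (at x)"
    using Suc.prems by (auto simp: smooth_upto_Suc)
  show ?case unfolding smooth_upto_Suc
  proof (intro conjI ballI allI)
    fix x show "(\<lambda>y. f y * g y) differentiable (at x)" using df dg by auto
  next
    fix b :: 'a assume b: "b \<in> Basis"
    have "smooth_upto n (dderiv b f)" "smooth_upto n (dderiv b g)"
      using Suc.prems b by (auto simp: smooth_upto_Suc)
    moreover have "smooth_upto n f" "smooth_upto n g" using Suc.prems by (auto intro: smooth_upto_SucD)
    ultimately show "smooth_upto n (dderiv b (\<lambda>y. f y * g y))"
      unfolding dderiv_mult[OF df dg] by (intro smooth_upto_add Suc.IH)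
  qed
qed

lemma smooth_upto_cnj: "smooth_upto n f \<Longrightarrow> smooth_upto n (\<lambda>y. cnj (f y))"
proof (induction n arbitrary: f)
  case 0 then show ?case by (auto simp: smooth_upto_0 simp: differentiable_cnj_iff)
next
  case (Suc n)
  have df: "\<And>x. f differentiable (at x)" using Suc.prems by (auto simp: smooth_upto_Suc)
  show ?case unfolding smooth_upto_Suc
  proof (intro conjI ballI allI)
    fix x show "(\<lambda>y. cnj (f y)) differentiable (at x)" using df by (auto simp: differentiable_cnj_iff)
  next
    fix b :: 'a assume b: "b \<in> Basis"
    show "smooth_upto n (dderiv b (\<lambda>y. cnj (f y)))"
      unfolding dderiv_cnj[OF df] using Suc.IH Suc.prems b by (auto simp: smooth_upto_Suc)
  qed
qed

lemma test_fun_differentiable: "test_fun D \<phi> \<Longrightarrow> \<phi> differentiable (at x)"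
  unfolding test_fun_def smooth_fun_iff_smooth_upto by (meson smooth_upto_differentiable)

lemma test_fun_dderiv_differentiable:
  "test_fun D \<phi> \<Longrightarrow> b \<in> Basis \<Longrightarrow> dderiv b \<phi> differentiable (at x)"
  unfolding test_fun_def smooth_fun_def by (auto dest!: spec[of _ "[b]"])

lemma continuous_on_UNIV_if_differentiable: "(\<And>x. f differentiable (at x)) \<Longrightarrow> continuous_on UNIV f"
  by (simp add: differentiable_imp_continuous_on differentiable_on_def)

lemma test_fun_continuous: "test_fun D \<phi> \<Longrightarrow> continuous_on UNIV \<phi>"
  by (intro continuous_on_UNIV_if_differentiable test_fun_differentiable)

lemma test_fun_dderiv_continuous: "test_fun D \<phi> \<Longrightarrow> b \<in> Basis \<Longrightarrow> continuous_on UNIV (dderiv b \<phi>)"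
  by (intro continuous_on_UNIV_if_differentiable test_fun_dderiv_differentiable)

lemma test_fun_bounded_support: "test_fun D \<phi> \<Longrightarrow> bounded {x. \<phi> x \<noteq> 0}"
  unfolding test_fun_def by (meson bounded_subset compact_imp_bounded closure_subset)

lemma test_fun_outside:
  assumes "test_fun D \<phi>" "x \<notin> D"
  shows "\<phi> x = 0" and "dderiv b \<phi> x = 0"
proof -
  define S where "S = closure {x. \<phi> x \<noteq> 0}"
  have zero: "\<phi> y = 0" if "y \<in> - S" for y
  proof (rule ccontr)
    assume "\<phi> y \<noteq> 0"
    then have "y \<in> S" unfolding S_def using closure_subset[of "{x. \<phi> x \<noteq> 0}"] by blast
    with that show False by blast
  qed
  have x: "x \<in> - S" using assms unfolding test_fun_def S_def by auto
  then show "\<phi> x = 0" by (rule zero)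
  have "open (- S)" unfolding S_def by (rule open_Compl[OF closed_closure])
  moreover have "((\<lambda>_. 0::complex) has_derivative (\<lambda>_. 0)) (at x within UNIV)"
    by (rule has_derivative_const)
  ultimately have "(\<phi> has_derivative (\<lambda>_. 0)) (at x)"
    using has_derivative_transform_within_open x zero by metis
  then show "dderiv b \<phi> x = 0" by (rule dderiv_eq)
qed

lemma smooth_fun_coordinate: "smooth_fun (\<lambda>x. complex_of_real (x \<bullet> e))"
  unfolding smooth_fun_iff_smooth_upto by (simp add: smooth_upto_coordinate)

lemma test_fun_mult_cnj:
  assumes g: "smooth_fun g" and \<psi>: "test_fun D \<psi>"
  shows "test_fun D (\<lambda>x. g x * cnj (\<psi> x))"
proof -
  have "smooth_fun (\<lambda>x. g x * cnj (\<psi> x))"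
    using g \<psi> unfolding test_fun_def smooth_fun_iff_smooth_upto
    by (simp add: smooth_upto_mult smooth_upto_cnj)
  moreover have sub: "closure {x. g x * cnj (\<psi> x) \<noteq> 0} \<subseteq> closure {x. \<psi> x \<noteq> 0}"
    by (intro closure_mono) auto
  moreover have "compact (closure {x. \<psi> x \<noteq> 0} \<inter> closure {x. g x * cnj (\<psi> x) \<noteq> 0})"
    using \<psi> unfolding test_fun_def by (intro compact_Int_closed) auto
  then have "compact (closure {x. g x * cnj (\<psi> x) \<noteq> 0})"
    using sub by (simp add: Int_absorb1)
  ultimately show ?thesis using \<psi> unfolding test_fun_def by blast
qed

lemma dderiv_coordinate_mult_cnj:
  assumes \<psi>: "test_fun D \<psi>" and "e \<in> Basis" "b \<in> Basis" "e \<noteq> b"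
  shows "dderiv b (\<lambda>x. complex_of_real (x \<bullet> e) * cnj (\<psi> x)) x
           = complex_of_real (x \<bullet> e) * cnj (dderiv b \<psi> x)"
proof -
  have d1: "\<And>x. (\<lambda>y. complex_of_real (y \<bullet> e)) differentiable (at x)"
    by (rule differentiableI[OF has_derivative_coordinate])
  have d2: "\<And>x. (\<lambda>y. cnj (\<psi> y)) differentiable (at x)"
    using test_fun_differentiable[OF \<psi>] by (simp add: differentiable_cnj_iff)
  have "b \<bullet> e = 0" using assms by (simp add: inner_Basis)
  then show ?thesis
    unfolding dderiv_mult[OF d1 d2] dderiv_coordinate dderiv_cnj[OF test_fun_differentiable[OF \<psi>]] by simp
qed

section \<open>Square-integrable functions\<close>

lemma borel_measurable_cnj [measurable (raw)]:
  fixes f :: "'b \<Rightarrow> complex"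
  assumes "f \<in> borel_measurable M"
  shows "(\<lambda>x. cnj (f x)) \<in> borel_measurable M"
  using measurable_compose[OF assms borel_measurable_continuous_onI[OF continuous_on_cnj[OF continuous_on_id]]]
  by simp

lemma Cauchy_Schwarz_integral:
  fixes f g :: "'b \<Rightarrow> real"
  assumes [measurable]: "f \<in> borel_measurable M" "g \<in> borel_measurable M"
    and i: "integrable M (\<lambda>x. (f x)^2)" "integrable M (\<lambda>x. (g x)^2)"
  shows "integrable M (\<lambda>x. f x * g x)"
    and "(\<integral>x. \<bar>f x * g x\<bar> \<partial>M) \<le> sqrt (\<integral>x. (f x)^2 \<partial>M) * sqrt (\<integral>x. (g x)^2 \<partial>M)"
proof -
  have b: "norm (f x * g x) \<le> ((f x)^2 + (g x)^2) / 2" for x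
  proof -
    have "0 \<le> (\<bar>f x\<bar> - \<bar>g x\<bar>)^2" by simp
    then show ?thesis by (simp add: power2_eq_square algebra_simps abs_mult)
  qed
  show fg: "integrable M (\<lambda>x. f x * g x)"
    by (rule Bochner_Integration.integrable_bound[where f="\<lambda>x. ((f x)^2 + (g x)^2) / 2"])
       (use i b in auto)
  have "ennreal (\<integral>x. \<bar>f x * g x\<bar> \<partial>M) = (\<integral>\<^sup>+x. ennreal \<bar>f x * g x\<bar> \<partial>M)"
    by (rule nn_integral_eq_integral[symmetric]) (use fg in auto)
  also have "\<dots> = (\<integral>\<^sup>+x. ennreal \<bar>f x\<bar> * ennreal \<bar>g x\<bar> \<partial>M)"
    by (simp add: abs_mult ennreal_mult)
  finally have e1: "ennreal (\<integral>x. \<bar>f x * g x\<bar> \<partial>M) = (\<integral>\<^sup>+x. ennreal \<bar>f x\<bar> * ennreal \<bar>g x\<bar> \<partial>M)" .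
  have e2: "(\<integral>\<^sup>+x. ennreal \<bar>h x\<bar> ^ 2 \<partial>M) = ennreal (\<integral>x. (h x)^2 \<partial>M)"
    if "integrable M (\<lambda>x. (h x)^2)" for h :: "'b \<Rightarrow> real"
  proof -
    have "(\<integral>\<^sup>+x. ennreal \<bar>h x\<bar> ^ 2 \<partial>M) = (\<integral>\<^sup>+x. ennreal ((h x)^2) \<partial>M)"
      by (simp add: ennreal_power)
    also have "\<dots> = ennreal (\<integral>x. (h x)^2 \<partial>M)"
      by (rule nn_integral_eq_integral) (use that in auto)
    finally show ?thesis .
  qed
  have "(\<integral>\<^sup>+x. ennreal \<bar>f x\<bar> * ennreal \<bar>g x\<bar> \<partial>M)^2 \<le> (\<integral>\<^sup>+x. ennreal \<bar>f x\<bar> ^ 2 \<partial>M) * (\<integral>\<^sup>+x. ennreal \<bar>g x\<bar> ^ 2 \<partial>M)"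
    by (rule Cauchy_Schwarz_nn_integral) measurable
  then have "ennreal ((\<integral>x. \<bar>f x * g x\<bar> \<partial>M)^2) \<le> ennreal ((\<integral>x. (f x)^2 \<partial>M) * (\<integral>x. (g x)^2 \<partial>M))"
    unfolding e1[symmetric] e2[OF i(1)] e2[OF i(2)]
    by (simp add: ennreal_power ennreal_mult integral_nonneg_AE)
  then have "(\<integral>x. \<bar>f x * g x\<bar> \<partial>M)^2 \<le> (\<integral>x. (f x)^2 \<partial>M) * (\<integral>x. (g x)^2 \<partial>M)"
    by (simp add: ennreal_le_iff integral_nonneg_AE)
  then have "(\<integral>x. \<bar>f x * g x\<bar> \<partial>M) \<le> sqrt ((\<integral>x. (f x)^2 \<partial>M) * (\<integral>x. (g x)^2 \<partial>M))"
    by (rule real_le_rsqrt)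
  then show "(\<integral>x. \<bar>f x * g x\<bar> \<partial>M) \<le> sqrt (\<integral>x. (f x)^2 \<partial>M) * sqrt (\<integral>x. (g x)^2 \<partial>M)"
    by (simp only: real_sqrt_mult)
qed

lemma Cauchy_Schwarz_integral_le:
  fixes f g :: "'b \<Rightarrow> real"
  assumes "f \<in> borel_measurable M" "g \<in> borel_measurable M"
    and "integrable M (\<lambda>x. (f x)^2)" "integrable M (\<lambda>x. (g x)^2)"
    and "(\<integral>x. (f x)^2 \<partial>M) \<le> A" "(\<integral>x. (g x)^2 \<partial>M) \<le> B"
  shows "(\<integral>x. \<bar>f x * g x\<bar> \<partial>M) \<le> sqrt A * sqrt B"
proof -
  have "0 \<le> (\<integral>x. (f x)^2 \<partial>M)" "0 \<le> (\<integral>x. (g x)^2 \<partial>M)"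
    by (intro integral_nonneg_AE; simp)+
  moreover from this assms(5,6) have "0 \<le> A" "0 \<le> B" by linarith+
  ultimately have "sqrt (\<integral>x. (f x)^2 \<partial>M) * sqrt (\<integral>x. (g x)^2 \<partial>M) \<le> sqrt A * sqrt B"
    using assms(5,6) by (intro mult_mono real_sqrt_le_mono) auto
  with Cauchy_Schwarz_integral(2)[OF assms(1-4)] show ?thesis by linarith
qed

lemma L2_measurable: "L2 D f \<Longrightarrow> f \<in> borel_measurable (lebesgue_on D)"
  unfolding L2_def by blast

lemma L2_integrable_square: "L2 D f \<Longrightarrow> integrable (lebesgue_on D) (\<lambda>x. (cmod (f x))^2)"
  unfolding L2_def by blast

lemma L2_cnj: "L2 D f \<Longrightarrow> L2 D (\<lambda>x. cnj (f x))"
  unfolding L2_def by (auto intro: borel_measurable_cnj)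

lemma L2_integrable_mult:
  assumes "L2 D f" "L2 D g"
  shows "integrable (lebesgue_on D) (\<lambda>x. f x * g x)"
proof (rule Bochner_Integration.integrable_bound[where f="\<lambda>x. ((cmod (f x))^2 + (cmod (g x))^2) / 2"])
  show "integrable (lebesgue_on D) (\<lambda>x. ((cmod (f x))^2 + (cmod (g x))^2) / 2)"
    using L2_integrable_square[OF assms(1)] L2_integrable_square[OF assms(2)] by auto
  show "(\<lambda>x. f x * g x) \<in> borel_measurable (lebesgue_on D)"
    using L2_measurable[OF assms(1)] L2_measurable[OF assms(2)] by measurable
  show "AE x in lebesgue_on D. norm (f x * g x) \<le> norm (((cmod (f x))^2 + (cmod (g x))^2) / 2)"
  proof (intro AE_I2)
    fix x
    have "0 \<le> (cmod (f x) - cmod (g x))^2" by simp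
    then have "cmod (f x) * cmod (g x) \<le> ((cmod (f x))^2 + (cmod (g x))^2) / 2"
      by (simp add: power2_eq_square algebra_simps)
    then show "norm (f x * g x) \<le> norm (((cmod (f x))^2 + (cmod (g x))^2) / 2)"
      by (simp add: norm_mult)
  qed
qed

lemma L2_diff:
  assumes "L2 D f" "L2 D g"
  shows "L2 D (\<lambda>x. f x - g x)"
  unfolding L2_def
proof
  show m: "(\<lambda>x. f x - g x) \<in> borel_measurable (lebesgue_on D)"
    using L2_measurable[OF assms(1)] L2_measurable[OF assms(2)] by measurable
  show "integrable (lebesgue_on D) (\<lambda>x. (cmod (f x - g x))^2)"
  proof (rule Bochner_Integration.integrable_bound[where f="\<lambda>x. 2 * (cmod (f x))^2 + 2 * (cmod (g x))^2"])
    show "integrable (lebesgue_on D) (\<lambda>x. 2 * (cmod (f x))^2 + 2 * (cmod (g x))^2)"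
      using L2_integrable_square[OF assms(1)] L2_integrable_square[OF assms(2)] by auto
    show "(\<lambda>x. (cmod (f x - g x))^2) \<in> borel_measurable (lebesgue_on D)" using m by measurable
    show "AE x in lebesgue_on D. norm ((cmod (f x - g x))^2) \<le> norm (2 * (cmod (f x))^2 + 2 * (cmod (g x))^2)"
    proof (intro AE_I2)
      fix x
      have t: "cmod (f x - g x) \<le> cmod (f x) + cmod (g x)" by (rule norm_triangle_ineq4)
      have "(cmod (f x - g x))^2 \<le> (cmod (f x) + cmod (g x))^2" using t by (simp add: power_mono)
      also have "\<dots> \<le> 2 * (cmod (f x))^2 + 2 * (cmod (g x))^2"
      proof -
        have "0 \<le> (cmod (f x) - cmod (g x))^2" by simp
        then show ?thesis by (simp add: power2_eq_square algebra_simps)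
      qed
      finally show "norm ((cmod (f x - g x))^2) \<le> norm (2 * (cmod (f x))^2 + 2 * (cmod (g x))^2)" by simp
    qed
  qed
qed

lemma L2_add:
  assumes "L2 D f" "L2 D g"
  shows "L2 D (\<lambda>x. f x + g x)"
proof -
  have "L2 D (\<lambda>x. f x - (- g x))"
    by (rule L2_diff[OF assms(1)]) (use assms(2) in \<open>simp add: L2_def\<close>)
  then show ?thesis by simp
qed

lemma L2_mult_bounded:
  assumes "L2 D f" and hm: "h \<in> borel_measurable (lebesgue_on D)" and hb: "AE x in lebesgue_on D. cmod (h x) \<le> B"
  shows "L2 D (\<lambda>x. h x * f x)"
  unfolding L2_def
proof
  show m: "(\<lambda>x. h x * f x) \<in> borel_measurable (lebesgue_on D)"
    using L2_measurable[OF assms(1)] hm by measurable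
  show "integrable (lebesgue_on D) (\<lambda>x. (cmod (h x * f x))^2)"
  proof (rule Bochner_Integration.integrable_bound[where f="\<lambda>x. B^2 * (cmod (f x))^2"])
    show "integrable (lebesgue_on D) (\<lambda>x. B^2 * (cmod (f x))^2)"
      using L2_integrable_square[OF assms(1)] by auto
    show "(\<lambda>x. (cmod (h x * f x))^2) \<in> borel_measurable (lebesgue_on D)" using m by measurable
    show "AE x in lebesgue_on D. norm ((cmod (h x * f x))^2) \<le> norm (B^2 * (cmod (f x))^2)"
      using hb
    proof eventually_elim
      case (elim x)
      have "(cmod (h x * f x))^2 = (cmod (h x))^2 * (cmod (f x))^2" by (simp add: norm_mult power_mult_distrib)
      also have "\<dots> \<le> B^2 * (cmod (f x))^2"
        using elim by (intro mult_right_mono power_mono) auto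
      finally show ?case by simp
    qed
  qed
qed

lemma L2_const_mult: "L2 D f \<Longrightarrow> L2 D (\<lambda>x. c * f x)"
  by (rule L2_mult_bounded[where B="cmod c"]) auto

lemma bounded_image_of_continuous:
  fixes f :: "'a::euclidean_space \<Rightarrow> 'b::real_normed_vector"
  assumes "bounded D" "continuous_on UNIV f"
  obtains B where "\<And>x. x \<in> D \<Longrightarrow> norm (f x) \<le> B"
proof -
  have "compact (f ` closure D)"
    using assms by (meson compact_closure compact_continuous_image continuous_on_subset subset_UNIV)
  then obtain B where "\<forall>y\<in>f ` closure D. norm y \<le> B"
    unfolding bounded_iff by (metis compact_imp_bounded bounded_iff)
  then show ?thesis using that closure_subset by blast
qed

lemma L2_mult_continuous:
  assumes D: "open D" "bounded D" and h: "continuous_on UNIV h" and "L2 D f"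
  shows "L2 D (\<lambda>x. h x * f x)"
proof -
  obtain B where "\<And>x. x \<in> D \<Longrightarrow> cmod (h x) \<le> B"
    using bounded_image_of_continuous[OF D(2) h] by blast
  then have "AE x in lebesgue_on D. cmod (h x) \<le> B"
    by (intro AE_I2) (simp add: space_restrict_space)
  moreover have "h \<in> borel_measurable (lebesgue_on D)"
    using D h by (intro continuous_imp_measurable_on_sets_lebesgue) (auto intro: continuous_on_subset)
  ultimately show ?thesis by (intro L2_mult_bounded[OF \<open>L2 D f\<close>])
qed

lemma L2_continuous:
  assumes "open D" "bounded D" and "continuous_on UNIV f"
  shows "L2 D f"
proof -
  have "finite_measure (lebesgue_on D)"
    using assms by (intro finite_measure_lebesgue_on bounded_set_imp_lmeasurable) auto
  then have "L2 D (\<lambda>_. 1)"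
    unfolding L2_def by (simp add: finite_measure.integrable_const)
  from L2_mult_continuous[OF assms this] show ?thesis by simp
qed

lemma test_fun_L2: "open D \<Longrightarrow> bounded D \<Longrightarrow> test_fun D \<phi> \<Longrightarrow> L2 D \<phi>"
  by (rule L2_continuous) (auto intro: test_fun_continuous)

lemma test_fun_dderiv_L2: "open D \<Longrightarrow> bounded D \<Longrightarrow> test_fun D \<phi> \<Longrightarrow> b \<in> Basis \<Longrightarrow> L2 D (dderiv b \<phi>)"
  by (rule L2_continuous) (auto intro: test_fun_dderiv_continuous)

lemma norm_integral_mult_le_sqrt:
  assumes "L2 D f" "L2 D g"
    and "(\<integral>x. (cmod (f x))^2 \<partial>lebesgue_on D) \<le> A" "(\<integral>x. (cmod (g x))^2 \<partial>lebesgue_on D) \<le> B"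
  shows "cmod (\<integral>x. f x * g x \<partial>lebesgue_on D) \<le> sqrt A * sqrt B"
proof -
  have "cmod (\<integral>x. f x * g x \<partial>lebesgue_on D) \<le> (\<integral>x. \<bar>cmod (f x) * cmod (g x)\<bar> \<partial>lebesgue_on D)"
    using integral_norm_bound[of "lebesgue_on D" "\<lambda>x. f x * g x"] by (simp add: norm_mult)
  also have "\<dots> \<le> sqrt A * sqrt B"
    using L2_measurable[OF assms(1)] L2_measurable[OF assms(2)] assms
    by (intro Cauchy_Schwarz_integral_le) (measurable, simp_all add: L2_integrable_square)
  finally show ?thesis .
qed

section \<open>The space \<open>H\<^sup>1\<^sub>0\<close>\<close>

definition H1_norm2 :: "'a::euclidean_space set \<Rightarrow> ('a \<Rightarrow> complex) \<Rightarrow> real" where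
  "H1_norm2 D u = (LINT x|lebesgue_on D. (cmod (u x))\<^sup>2 + (\<Sum>b\<in>Basis. (cmod (wpd D b u x))\<^sup>2))"

lemma H_norm2_eq_sum_H1_norm2: "H_norm2 D p v = (\<Sum>j<p. H1_norm2 D (v j))"
  unfolding H_norm2_def H1_norm2_def ..

lemma H1_norm2_nonneg: "0 \<le> H1_norm2 D u"
  unfolding H1_norm2_def by (intro integral_nonneg_AE AE_I2) (auto intro!: add_nonneg_nonneg sum_nonneg)

lemma H10_L2: "H10 D u \<Longrightarrow> L2 D u"
  by (simp add: H10_def)

lemma H10_wpd:
  assumes "H10 D u" "b \<in> Basis"
  shows "L2 D (wpd D b u)" and "weak_partial D u b (wpd D b u)"
proof -
  have "\<exists>g. L2 D g \<and> weak_partial D u b g" using assms unfolding H10_def by blast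
  then have "L2 D (wpd D b u) \<and> weak_partial D u b (wpd D b u)" unfolding wpd_def by (rule someI_ex)
  then show "L2 D (wpd D b u)" "weak_partial D u b (wpd D b u)" by auto
qed

lemma H10_approx:
  assumes "H10 D u"
  obtains \<phi>s where "\<And>n. test_fun D (\<phi>s n)" "(\<lambda>n. L2_dist2 D (\<phi>s n) u) \<longlonglongrightarrow> 0"
    "\<And>b. b \<in> Basis \<Longrightarrow> (\<lambda>n. L2_dist2 D (dderiv b (\<phi>s n)) (wpd D b u)) \<longlonglongrightarrow> 0"
  using assms unfolding H10_def by blast

lemma H10_integrable_H1_density:
  assumes "H10 D u"
  shows "integrable (lebesgue_on D) (\<lambda>x. (cmod (u x))\<^sup>2 + (\<Sum>b\<in>Basis. (cmod (wpd D b u x))\<^sup>2))"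
  using L2_integrable_square[OF H10_L2[OF assms]] L2_integrable_square[OF H10_wpd(1)[OF assms]] by auto

lemma H10_L2_norm_le:
  assumes "H10 D u"
  shows "(\<integral>x. (cmod (u x))^2 \<partial>lebesgue_on D) \<le> H1_norm2 D u"
    and "b \<in> Basis \<Longrightarrow> (\<integral>x. (cmod (wpd D b u x))^2 \<partial>lebesgue_on D) \<le> H1_norm2 D u"
proof -
  show "(\<integral>x. (cmod (u x))^2 \<partial>lebesgue_on D) \<le> H1_norm2 D u"
    unfolding H1_norm2_def using assms
    by (intro integral_mono L2_integrable_square H10_L2 H10_integrable_H1_density) (auto intro: sum_nonneg)
  assume b: "b \<in> Basis"
  have "(cmod (wpd D b u x))^2 \<le> (cmod (u x))\<^sup>2 + (\<Sum>b\<in>Basis. (cmod (wpd D b u x))\<^sup>2)" for x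
    using member_le_sum[of b Basis "\<lambda>b. (cmod (wpd D b u x))\<^sup>2"] b by (simp add: add_increasing)
  then show "(\<integral>x. (cmod (wpd D b u x))^2 \<partial>lebesgue_on D) \<le> H1_norm2 D u"
    unfolding H1_norm2_def using assms b
    by (intro integral_mono L2_integrable_square H10_wpd(1) H10_integrable_H1_density)
qed

lemma nn_integral_lebesgue_on_eq_lborel:
  fixes f :: "'a::euclidean_space \<Rightarrow> ennreal"
  assumes "open D" and "f \<in> borel_measurable borel" and "\<And>x. x \<notin> D \<Longrightarrow> f x = 0"
  shows "(\<integral>\<^sup>+x. f x \<partial>lebesgue_on D) = (\<integral>\<^sup>+x. f x \<partial>lborel)"
proof -
  have "(\<integral>\<^sup>+x. f x \<partial>lebesgue_on D) = (\<integral>\<^sup>+x. f x * indicator D x \<partial>lebesgue)"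
    using assms(1) by (simp add: nn_integral_restrict_space)
  also have "\<dots> = (\<integral>\<^sup>+x. f x \<partial>lebesgue)"
    using assms(3) by (intro nn_integral_cong) (auto simp: indicator_def)
  also have "\<dots> = (\<integral>\<^sup>+x. f x \<partial>lborel)"
    by (simp add: nn_integral_completion)
  finally show ?thesis .
qed

lemma test_fun_L4_bound:
  fixes \<phi> :: "'a::euclidean_space \<Rightarrow> complex"
  assumes dim: "DIM('a) = 2 \<or> DIM('a) = 3" and "open D" and \<phi>: "test_fun D \<phi>"
  shows "(\<integral>\<^sup>+x. ennreal ((cmod (\<phi> x))^4) \<partial>lebesgue_on D)
           \<le> 2 * (\<integral>\<^sup>+x. ennreal ((cmod (\<phi> x))^2 + (\<Sum>b\<in>Basis. (cmod (dderiv b \<phi> x))^2)) \<partial>lebesgue_on D)^2"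
proof -
  have [measurable]: "(\<lambda>x. cmod (\<phi> x)) \<in> borel_measurable borel"
    by (intro borel_measurable_continuous_onI continuous_intros test_fun_continuous[OF \<phi>])
  have [measurable]: "(\<lambda>x. cmod (dderiv b \<phi> x)) \<in> borel_measurable borel" if "b \<in> Basis" for b
    by (intro borel_measurable_continuous_onI continuous_intros test_fun_dderiv_continuous[OF \<phi> that])
  have "(\<integral>\<^sup>+x. ennreal ((cmod (\<phi> x))^4) \<partial>lebesgue_on D) = (\<integral>\<^sup>+x. ennreal ((cmod (\<phi> x))^4) \<partial>lborel)"
    using test_fun_outside[OF \<phi>] by (intro nn_integral_lebesgue_on_eq_lborel \<open>open D\<close>) auto
  also have "\<dots> \<le> 2 * (\<integral>\<^sup>+x. ennreal ((cmod (\<phi> x))^2 + (\<Sum>b\<in>Basis. (cmod (dderiv b \<phi> x))^2)) \<partial>lborel)^2"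
    using test_fun_differentiable[OF \<phi>] test_fun_dderiv_continuous[OF \<phi>] test_fun_bounded_support[OF \<phi>]
    by (intro ladyzhenskaya_euclidean dim)
  also have "(\<integral>\<^sup>+x. ennreal ((cmod (\<phi> x))^2 + (\<Sum>b\<in>Basis. (cmod (dderiv b \<phi> x))^2)) \<partial>lborel)
      = (\<integral>\<^sup>+x. ennreal ((cmod (\<phi> x))^2 + (\<Sum>b\<in>Basis. (cmod (dderiv b \<phi> x))^2)) \<partial>lebesgue_on D)"
    using test_fun_outside[OF \<phi>] by (intro nn_integral_lebesgue_on_eq_lborel[symmetric] \<open>open D\<close>) auto
  finally show ?thesis .
qed

lemma norm_power2_le_diff: "(cmod a)^2 \<le> 2 * (cmod (a - c))^2 + 2 * (cmod c)^2"
proof -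
  have t: "cmod a \<le> cmod (a - c) + cmod c" by (metis diff_add_cancel norm_triangle_ineq)
  have "(cmod a)^2 \<le> (cmod (a - c) + cmod c)^2" using t by (simp add: power_mono)
  also have "\<dots> \<le> 2 * (cmod (a - c))^2 + 2 * (cmod c)^2"
  proof -
    have "0 \<le> (cmod (a - c) - cmod c)^2" by simp
    then show ?thesis by (simp add: power2_eq_square algebra_simps)
  qed
  finally show ?thesis .
qed

lemma nn_integral_H1_density_test_le:
  assumes D: "open D" "bounded D" and \<phi>: "test_fun D \<phi>" and u: "H10 D u"
  shows "(\<integral>\<^sup>+x. ennreal ((cmod (\<phi> x))^2 + (\<Sum>b\<in>Basis. (cmod (dderiv b \<phi> x))^2)) \<partial>lebesgue_on D)
           \<le> ennreal (2 * (L2_dist2 D \<phi> u + (\<Sum>b\<in>Basis. L2_dist2 D (dderiv b \<phi>) (wpd D b u)))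
                     + 2 * H1_norm2 D u)"
proof -
  let ?M = "lebesgue_on D"
  define F where "F x = (cmod (\<phi> x - u x))^2 + (\<Sum>b\<in>Basis. (cmod (dderiv b \<phi> x - wpd D b u x))^2)" for x
  define H where "H x = (cmod (u x))^2 + (\<Sum>b\<in>Basis. (cmod (wpd D b u x))^2)" for x
  have F1: "integrable ?M (\<lambda>x. (cmod (\<phi> x - u x))^2)"
    by (intro L2_integrable_square L2_diff test_fun_L2 H10_L2 D \<phi> u)
  have F2: "integrable ?M (\<lambda>x. (cmod (dderiv b \<phi> x - wpd D b u x))^2)" if "b \<in> Basis" for b
    by (intro L2_integrable_square L2_diff test_fun_dderiv_L2 H10_wpd(1) D \<phi> u that)
  have F: "integrable ?M F" unfolding F_def using F1 F2 by auto
  have H: "integrable ?M H" unfolding H_def by (rule H10_integrable_H1_density[OF u])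
  then have FH: "integrable ?M (\<lambda>x. 2 * F x + 2 * H x)" using F by auto
  have intF: "(\<integral>x. F x \<partial>?M) = L2_dist2 D \<phi> u + (\<Sum>b\<in>Basis. L2_dist2 D (dderiv b \<phi>) (wpd D b u))"
    unfolding F_def L2_dist2_def using F1 F2 by (simp add: Bochner_Integration.integral_add integral_sum)
  have intH: "(\<integral>x. H x \<partial>?M) = H1_norm2 D u" unfolding H_def H1_norm2_def ..
  have "(\<integral>\<^sup>+x. ennreal ((cmod (\<phi> x))^2 + (\<Sum>b\<in>Basis. (cmod (dderiv b \<phi> x))^2)) \<partial>?M)
      \<le> (\<integral>\<^sup>+x. ennreal (2 * F x + 2 * H x) \<partial>?M)"
  proof (intro nn_integral_mono ennreal_leI)
    fix x
    have "(cmod (\<phi> x))^2 + (\<Sum>b\<in>Basis. (cmod (dderiv b \<phi> x))^2)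
       \<le> (2 * (cmod (\<phi> x - u x))^2 + 2 * (cmod (u x))^2) +
          (\<Sum>b\<in>Basis. 2 * (cmod (dderiv b \<phi> x - wpd D b u x))^2 + 2 * (cmod (wpd D b u x))^2)"
      by (intro add_mono norm_power2_le_diff sum_mono)
    then show "(cmod (\<phi> x))^2 + (\<Sum>b\<in>Basis. (cmod (dderiv b \<phi> x))^2) \<le> 2 * F x + 2 * H x"
      unfolding F_def H_def by (simp add: sum.distrib sum_distrib_left algebra_simps)
  qed
  also have "\<dots> = ennreal (\<integral>x. 2 * F x + 2 * H x \<partial>?M)"
  proof (intro nn_integral_eq_integral FH AE_I2)
    have "0 \<le> F x" "0 \<le> H x" for x
      unfolding F_def H_def by (auto intro!: add_nonneg_nonneg sum_nonneg)
    then show "0 \<le> 2 * F x + 2 * H x" for x by simp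
  qed
  also have "(\<integral>x. 2 * F x + 2 * H x \<partial>?M)
      = 2 * (L2_dist2 D \<phi> u + (\<Sum>b\<in>Basis. L2_dist2 D (dderiv b \<phi>) (wpd D b u))) + 2 * H1_norm2 D u"
    using F H intF intH by simp
  finally show ?thesis .
qed

text \<open>Fatou's lemma along an a.e. convergent subsequence.\<close>
lemma nn_integral_power4_le_of_L2_convergence:
  assumes fs: "\<And>n. L2 D (fs n)" and f: "L2 D f" and conv: "(\<lambda>n. L2_dist2 D (fs n) f) \<longlonglongrightarrow> 0"
    and bound: "\<And>n. (\<integral>\<^sup>+x. ennreal ((cmod (fs n x))^4) \<partial>lebesgue_on D) \<le> ennreal (B n)"
    and B: "B \<longlonglongrightarrow> B0"
  shows "(\<integral>\<^sup>+x. ennreal ((cmod (f x))^4) \<partial>lebesgue_on D) \<le> ennreal B0"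
proof -
  let ?M = "lebesgue_on D"
  obtain r :: "nat \<Rightarrow> nat" where r: "strict_mono r"
    and ae: "AE x in ?M. (\<lambda>n. (cmod (fs (r n) x - f x))^2) \<longlonglongrightarrow> 0"
  proof (rule exE[OF tendsto_L1_AE_subseq[of ?M "\<lambda>n x. (cmod (fs n x - f x))^2"]])
    show "integrable ?M (\<lambda>x. (cmod (fs n x - f x))^2)" for n
      by (intro L2_integrable_square L2_diff fs f)
    show "(\<lambda>n. \<integral>x. norm ((cmod (fs n x - f x))^2) \<partial>?M) \<longlonglongrightarrow> 0"
      using conv unfolding L2_dist2_def by simp
  qed auto
  have pointwise: "(\<lambda>n. ennreal ((cmod (fs (r n) x))^4)) \<longlonglongrightarrow> ennreal ((cmod (f x))^4)"
    if "(\<lambda>n. (cmod (fs (r n) x - f x))^2) \<longlonglongrightarrow> 0" for x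
  proof -
    have "(\<lambda>n. cmod (fs (r n) x - f x)) \<longlonglongrightarrow> 0"
      using tendsto_real_sqrt[OF that] by simp
    then have "(\<lambda>n. fs (r n) x) \<longlonglongrightarrow> f x"
      by (simp add: tendsto_norm_zero_iff LIM_zero_iff)
    then show ?thesis by (intro tendsto_ennrealI tendsto_intros)
  qed
  have "(\<integral>\<^sup>+x. ennreal ((cmod (f x))^4) \<partial>?M) = (\<integral>\<^sup>+x. liminf (\<lambda>n. ennreal ((cmod (fs (r n) x))^4)) \<partial>?M)"
    using ae by (intro nn_integral_cong_AE, eventually_elim) (auto intro!: lim_imp_Liminf[symmetric] pointwise)
  also have "\<dots> \<le> liminf (\<lambda>n. \<integral>\<^sup>+x. ennreal ((cmod (fs (r n) x))^4) \<partial>?M)"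
    using L2_measurable[OF fs] by (intro nn_integral_liminf) measurable
  also have "\<dots> \<le> liminf (\<lambda>n. ennreal (B (r n)))"
    by (intro Liminf_mono always_eventually allI bound)
  also have "\<dots> = ennreal B0"
    using LIMSEQ_subseq_LIMSEQ[OF B r] by (intro lim_imp_Liminf tendsto_ennrealI) (simp_all add: comp_def)
  finally show ?thesis .
qed

lemma H10_L4_bound:
  fixes u :: "'a::euclidean_space \<Rightarrow> complex"
  assumes dim: "DIM('a) = 2 \<or> DIM('a) = 3" and D: "open D" "bounded D" and u: "H10 D u"
  shows "integrable (lebesgue_on D) (\<lambda>x. (cmod (u x))^4)"
    and "(\<integral>x. (cmod (u x))^4 \<partial>lebesgue_on D) \<le> 8 * (H1_norm2 D u)^2"
proof -
  let ?M = "lebesgue_on D"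
  define N where "N = H1_norm2 D u"
  obtain \<phi>s where \<phi>s: "\<And>n. test_fun D (\<phi>s n)" and conv0: "(\<lambda>n. L2_dist2 D (\<phi>s n) u) \<longlonglongrightarrow> 0"
    and conv1: "\<And>b. b \<in> Basis \<Longrightarrow> (\<lambda>n. L2_dist2 D (dderiv b (\<phi>s n)) (wpd D b u)) \<longlonglongrightarrow> 0"
    using H10_approx[OF u] by blast
  define e where "e n = L2_dist2 D (\<phi>s n) u + (\<Sum>b\<in>Basis. L2_dist2 D (dderiv b (\<phi>s n)) (wpd D b u))" for n
  have "e \<longlonglongrightarrow> 0" unfolding e_def by (intro tendsto_add_zero conv0 tendsto_null_sum conv1)
  then have B: "(\<lambda>n. 2 * (2 * e n + 2 * N)^2) \<longlonglongrightarrow> 8 * N^2"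
    using tendsto_intros(4-) by (auto intro!: tendsto_eq_intros simp: power2_eq_square)
  have nonneg: "0 \<le> 2 * e n + 2 * N" for n
    unfolding e_def L2_dist2_def N_def using H1_norm2_nonneg[of D u]
    by (intro add_nonneg_nonneg mult_nonneg_nonneg sum_nonneg integral_nonneg_AE AE_I2) auto
  have bound: "(\<integral>\<^sup>+x. ennreal ((cmod (\<phi>s n x))^4) \<partial>?M) \<le> ennreal (2 * (2 * e n + 2 * N)^2)" for n
  proof -
    have "(\<integral>\<^sup>+x. ennreal ((cmod (\<phi>s n x))^4) \<partial>?M)
        \<le> 2 * (\<integral>\<^sup>+x. ennreal ((cmod (\<phi>s n x))^2 + (\<Sum>b\<in>Basis. (cmod (dderiv b (\<phi>s n) x))^2)) \<partial>?M)^2"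
      by (rule test_fun_L4_bound[OF dim D(1) \<phi>s])
    also have "\<dots> \<le> 2 * ennreal (2 * e n + 2 * N)^2"
      using nn_integral_H1_density_test_le[OF D \<phi>s u, of n] unfolding e_def N_def
      by (intro mult_left_mono power_mono_ennreal) simp_all
    also have "\<dots> = ennreal (2 * (2 * e n + 2 * N)^2)"
      using nonneg[of n] by (simp add: ennreal_power ennreal_mult)
    finally show ?thesis .
  qed
  have fin: "(\<integral>\<^sup>+x. ennreal ((cmod (u x))^4) \<partial>?M) \<le> ennreal (8 * N^2)"
    using D \<phi>s by (intro nn_integral_power4_le_of_L2_convergence[OF _ H10_L2[OF u] conv0 bound B])
      (rule test_fun_L2)
  have [measurable]: "u \<in> borel_measurable ?M" by (rule L2_measurable[OF H10_L2[OF u]])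
  show integrable: "integrable ?M (\<lambda>x. (cmod (u x))^4)"
    using fin by (intro integrableI_bounded) (auto simp: top.not_eq_extremum intro: le_less_trans)
  have "ennreal (\<integral>x. (cmod (u x))^4 \<partial>?M) = (\<integral>\<^sup>+x. ennreal ((cmod (u x))^4) \<partial>?M)"
    using integrable by (intro nn_integral_eq_integral[symmetric]) auto
  with fin have "ennreal (\<integral>x. (cmod (u x))^4 \<partial>?M) \<le> ennreal (8 * N^2)" by simp
  then show "(\<integral>x. (cmod (u x))^4 \<partial>?M) \<le> 8 * (H1_norm2 D u)^2"
    unfolding N_def by (simp add: ennreal_le_iff)
qed

lemma sqrt_8_mult: "sqrt (8 * a) * sqrt (8 * b) = 8 * sqrt a * sqrt b"
  by (simp add: real_sqrt_mult mult_ac)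

lemma H10_density_term:
  fixes \<phi> f g :: "'a::euclidean_space \<Rightarrow> complex"
  assumes dim: "DIM('a) = 2 \<or> DIM('a) = 3" and D: "open D" "bounded D"
    and H: "H10 D \<phi>" "H10 D f" "H10 D g"
  shows "integrable (lebesgue_on D) (\<lambda>x. complex_of_real ((cmod (\<phi> x))^2) * f x * cnj (g x))"
    and "(\<integral>x. (cmod (\<phi> x))^2 * (cmod (f x) * cmod (g x)) \<partial>lebesgue_on D)
           \<le> 8 * H1_norm2 D \<phi> * sqrt (H1_norm2 D f) * sqrt (H1_norm2 D g)"
proof -
  let ?M = "lebesgue_on D"
  have [measurable]: "\<phi> \<in> borel_measurable ?M" "f \<in> borel_measurable ?M" "g \<in> borel_measurable ?M"
    using H by (simp_all add: L2_measurable H10_L2)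
  have L4: "integrable ?M (\<lambda>x. ((cmod (u x))^2)^2)" "(\<integral>x. ((cmod (u x))^2)^2 \<partial>?M) \<le> 8 * (H1_norm2 D u)^2"
    if "H10 D u" for u
    using H10_L4_bound[OF dim D that] by (simp_all flip: power_mult)
  have fg: "integrable ?M (\<lambda>x. (cmod (f x) * cmod (g x))^2)"
    using Cauchy_Schwarz_integral(1)[of "\<lambda>x. (cmod (f x))^2" ?M "\<lambda>x. (cmod (g x))^2"] L4(1)[OF H(2)] L4(1)[OF H(3)]
    by (simp add: power_mult_distrib)
  have "(\<integral>x. (cmod (f x) * cmod (g x))^2 \<partial>?M) \<le> sqrt (8 * (H1_norm2 D f)^2) * sqrt (8 * (H1_norm2 D g)^2)"
    using Cauchy_Schwarz_integral_le[of "\<lambda>x. (cmod (f x))^2" ?M "\<lambda>x. (cmod (g x))^2"] L4[OF H(2)] L4[OF H(3)]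
    by (simp add: power_mult_distrib)
  then have fg_le: "(\<integral>x. (cmod (f x) * cmod (g x))^2 \<partial>?M) \<le> 8 * (H1_norm2 D f * H1_norm2 D g)"
    by (simp add: sqrt_8_mult H1_norm2_nonneg)
  have \<phi>fg: "integrable ?M (\<lambda>x. (cmod (\<phi> x))^2 * (cmod (f x) * cmod (g x)))"
    using Cauchy_Schwarz_integral(1)[of "\<lambda>x. (cmod (\<phi> x))^2" ?M "\<lambda>x. cmod (f x) * cmod (g x)"] L4(1)[OF H(1)] fg
    by simp
  then show "integrable ?M (\<lambda>x. complex_of_real ((cmod (\<phi> x))^2) * f x * cnj (g x))"
    by (rule Bochner_Integration.integrable_bound) (auto simp: norm_mult norm_power)
  have "(\<integral>x. \<bar>(cmod (\<phi> x))^2 * (cmod (f x) * cmod (g x))\<bar> \<partial>?M)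
      \<le> sqrt (8 * (H1_norm2 D \<phi>)^2) * sqrt (8 * (H1_norm2 D f * H1_norm2 D g))"
    using L4[OF H(1)] fg fg_le by (intro Cauchy_Schwarz_integral_le) simp_all
  then show "(\<integral>x. (cmod (\<phi> x))^2 * (cmod (f x) * cmod (g x)) \<partial>?M)
      \<le> 8 * H1_norm2 D \<phi> * sqrt (H1_norm2 D f) * sqrt (H1_norm2 D g)"
    by (simp add: sqrt_8_mult H1_norm2_nonneg real_sqrt_mult mult_ac)
qed

lemma tendsto_integral_mult_cnj:
  assumes h: "L2 D h" and f: "L2 D f" and fs: "\<And>n. L2 D (fs n)"
    and conv: "(\<lambda>n. L2_dist2 D (fs n) f) \<longlonglongrightarrow> 0"
  shows "(\<lambda>n. \<integral>x. h x * cnj (fs n x) \<partial>lebesgue_on D) \<longlonglongrightarrow> (\<integral>x. h x * cnj (f x) \<partial>lebesgue_on D)"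
proof (rule LIM_zero_cancel, rule Lim_null_comparison)
  let ?M = "lebesgue_on D"
  let ?g = "\<lambda>n. sqrt (\<integral>x. (cmod (h x))^2 \<partial>?M) * sqrt (L2_dist2 D (fs n) f)"
  show "\<forall>\<^sub>F n in sequentially. norm ((\<integral>x. h x * cnj (fs n x) \<partial>?M) - (\<integral>x. h x * cnj (f x) \<partial>?M)) \<le> ?g n"
  proof (intro always_eventually allI)
    fix n
    have "(\<integral>x. h x * cnj (fs n x) \<partial>?M) - (\<integral>x. h x * cnj (f x) \<partial>?M) = (\<integral>x. h x * cnj (fs n x - f x) \<partial>?M)"
      using h f fs by (simp add: right_diff_distrib L2_integrable_mult L2_cnj flip: Bochner_Integration.integral_diff)
    also have "norm \<dots> \<le> ?g n"
      unfolding L2_dist2_def using h f fs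
      by (intro norm_integral_mult_le_sqrt L2_cnj L2_diff) (simp_all flip: complex_cnj_diff)
    finally show "norm ((\<integral>x. h x * cnj (fs n x) \<partial>?M) - (\<integral>x. h x * cnj (f x) \<partial>?M)) \<le> ?g n" .
  qed
  show "?g \<longlonglongrightarrow> 0"
    using tendsto_mult_left[OF tendsto_real_sqrt[OF conv]] by simp
qed

text \<open>Test the weak derivative of \<open>v\<close> against \<open>x\<^sub>e \<psi>\<^sup>*\<close> for test functions \<open>\<psi> \<rightarrow> w\<close>;
  as \<open>b \<noteq> e\<close>, \<open>\<partial>\<^sub>b (x\<^sub>e \<psi>\<^sup>*) = x\<^sub>e \<partial>\<^sub>b \<psi>\<^sup>*\<close>.\<close>
lemma H10_integration_by_parts:
  fixes v w :: "'a::euclidean_space \<Rightarrow> complex"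
  assumes D: "open D" "bounded D" and eb: "e \<in> Basis" "b \<in> Basis" "e \<noteq> b"
    and v: "H10 D v" and w: "H10 D w"
  shows "(\<integral>x. complex_of_real (x \<bullet> e) * cnj (w x) * wpd D b v x \<partial>lebesgue_on D)
           = - (\<integral>x. complex_of_real (x \<bullet> e) * v x * cnj (wpd D b w x) \<partial>lebesgue_on D)"
proof -
  let ?M = "lebesgue_on D"
  let ?X = "\<lambda>x. complex_of_real (x \<bullet> e)"
  have X: "continuous_on UNIV ?X" by (intro continuous_intros)
  obtain \<phi>s where \<phi>s: "\<And>n. test_fun D (\<phi>s n)" and conv0: "(\<lambda>n. L2_dist2 D (\<phi>s n) w) \<longlonglongrightarrow> 0"
    and conv1: "(\<lambda>n. L2_dist2 D (dderiv b (\<phi>s n)) (wpd D b w)) \<longlonglongrightarrow> 0"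
    using H10_approx[OF w] eb(2) by metis
  have Xv: "L2 D (\<lambda>x. ?X x * v x)" and Xg: "L2 D (\<lambda>x. ?X x * wpd D b v x)"
    using H10_L2[OF v] H10_wpd(1)[OF v eb(2)] by (simp_all add: L2_mult_continuous[OF D X])
  have approx: "(\<integral>x. ?X x * v x * cnj (dderiv b (\<phi>s n) x) \<partial>?M)
      = - (\<integral>x. ?X x * wpd D b v x * cnj (\<phi>s n x) \<partial>?M)" for n
  proof -
    have "test_fun D (\<lambda>x. ?X x * cnj (\<phi>s n x))"
      by (intro test_fun_mult_cnj smooth_fun_coordinate \<phi>s)
    with H10_wpd(2)[OF v eb(2)]
    have "(\<integral>x. v x * dderiv b (\<lambda>x. ?X x * cnj (\<phi>s n x)) x \<partial>?M)
        = - (\<integral>x. wpd D b v x * (?X x * cnj (\<phi>s n x)) \<partial>?M)"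
      unfolding weak_partial_def by blast
    then show ?thesis
      unfolding dderiv_coordinate_mult_cnj[OF \<phi>s eb] by (simp add: mult_ac)
  qed
  have "(\<lambda>n. \<integral>x. ?X x * v x * cnj (dderiv b (\<phi>s n) x) \<partial>?M)
      \<longlonglongrightarrow> (\<integral>x. ?X x * v x * cnj (wpd D b w x) \<partial>?M)"
    by (rule tendsto_integral_mult_cnj[OF Xv H10_wpd(1)[OF w eb(2)] test_fun_dderiv_L2[OF D \<phi>s eb(2)] conv1])
  moreover have "(\<lambda>n. \<integral>x. ?X x * v x * cnj (dderiv b (\<phi>s n) x) \<partial>?M)
      \<longlonglongrightarrow> - (\<integral>x. ?X x * wpd D b v x * cnj (w x) \<partial>?M)"
    unfolding approx
    by (intro tendsto_minus tendsto_integral_mult_cnj[OF Xg H10_L2[OF w] test_fun_L2[OF D \<phi>s] conv0])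
  ultimately show ?thesis
    using LIMSEQ_unique by (fastforce simp: mult_ac)
qed

section \<open>The bilinear form\<close>

lemma Rvec_inner_Basis:
  assumes "e1 \<in> Basis" "e2 \<in> Basis" "e1 \<noteq> e2" "b \<in> Basis"
  shows "Rvec e1 e2 x \<bullet> b = (if b = e1 then x \<bullet> e2 else if b = e2 then - (x \<bullet> e1) else 0)"
  using assms by (auto simp: Rvec_def inner_diff_left inner_Basis)

lemma sum_Basis_eq_two:
  fixes e1 e2 :: "'a::euclidean_space"
  assumes "e1 \<in> Basis" "e2 \<in> Basis" "e1 \<noteq> e2" "\<And>b. b \<in> Basis \<Longrightarrow> b \<noteq> e1 \<Longrightarrow> b \<noteq> e2 \<Longrightarrow> E b = 0"
  shows "(\<Sum>b\<in>Basis. E b) = E e1 + E e2"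
proof -
  have "(\<Sum>b\<in>Basis. E b) = (\<Sum>b\<in>{e1, e2}. E b)"
    by (rule sum.mono_neutral_right) (use assms in auto)
  then show ?thesis using assms by simp
qed

text \<open>Completing the square: the rotation term is absorbed into the rotating gradient, at the price
  of the centrifugal correction \<open>\<Omega>\<^sup>2 (x\<^sub>1\<^sup>2 + x\<^sub>2\<^sup>2) / 4\<close> of the potential.\<close>
lemma Re_rotation_complete_square:
  fixes d :: "'a::euclidean_space \<Rightarrow> complex" and u :: complex and Om v :: real
  assumes e: "e1 \<in> Basis" "e2 \<in> Basis" "e1 \<noteq> e2"
  shows "Re ((\<Sum>b\<in>Basis. d b * cnj (d b)) + of_real v * u * cnj u
           - of_real Om * cnj u * (- \<i> * (of_real (x \<bullet> e1) * d e2 - of_real (x \<bullet> e2) * d e1)))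
       = Re ((\<Sum>b\<in>Basis. (d b + \<i> * of_real (Om / 2) * of_real (Rvec e1 e2 x \<bullet> b) * u) *
                            cnj (d b + \<i> * of_real (Om / 2) * of_real (Rvec e1 e2 x \<bullet> b) * u))
             + of_real (v - Om\<^sup>2 / 4 * ((x \<bullet> e1)\<^sup>2 + (x \<bullet> e2)\<^sup>2)) * u * cnj u)"
proof -
  define F where "F b = (d b + \<i> * of_real (Om / 2) * of_real (Rvec e1 e2 x \<bullet> b) * u) *
                          cnj (d b + \<i> * of_real (Om / 2) * of_real (Rvec e1 e2 x \<bullet> b) * u)" for b
  define E where "E b = F b - d b * cnj (d b)" for b
  have E0: "E b = 0" if "b \<in> Basis" "b \<noteq> e1" "b \<noteq> e2" for b
    unfolding E_def F_def using Rvec_inner_Basis[OF e that(1)] that by simp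
  have "(\<Sum>b\<in>Basis. F b) = (\<Sum>b\<in>Basis. d b * cnj (d b) + E b)" unfolding E_def by simp
  also have "\<dots> = (\<Sum>b\<in>Basis. d b * cnj (d b)) + (E e1 + E e2)"
    by (simp add: sum.distrib sum_Basis_eq_two[OF e E0])
  finally have sum_F: "(\<Sum>b\<in>Basis. F b) = (\<Sum>b\<in>Basis. d b * cnj (d b)) + (E e1 + E e2)" .
  have E1: "E e1 = (\<i> * of_real (Om / 2) * of_real (x \<bullet> e2) * u) * cnj (d e1)
      + d e1 * cnj (\<i> * of_real (Om / 2) * of_real (x \<bullet> e2) * u)
      + (\<i> * of_real (Om / 2) * of_real (x \<bullet> e2) * u) * cnj (\<i> * of_real (Om / 2) * of_real (x \<bullet> e2) * u)"
    unfolding E_def F_def using Rvec_inner_Basis[OF e e(1)] by (simp add: algebra_simps)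
  have E2: "E e2 = (\<i> * of_real (Om / 2) * of_real (- (x \<bullet> e1)) * u) * cnj (d e2)
      + d e2 * cnj (\<i> * of_real (Om / 2) * of_real (- (x \<bullet> e1)) * u)
      + (\<i> * of_real (Om / 2) * of_real (- (x \<bullet> e1)) * u) * cnj (\<i> * of_real (Om / 2) * of_real (- (x \<bullet> e1)) * u)"
    unfolding E_def F_def using Rvec_inner_Basis[OF e e(2)] e by (simp add: algebra_simps)
  show ?thesis
    unfolding F_def[symmetric] sum_F E1 E2 by (simp add: algebra_simps power2_eq_square) (simp add: field_simps)
qed

definition local_integrand ::
  "'a::euclidean_space set \<Rightarrow> ('a \<Rightarrow> real) \<Rightarrow> ('a \<Rightarrow> real) \<Rightarrow> ('a \<Rightarrow> complex) \<Rightarrow> ('a \<Rightarrow> complex) \<Rightarrow> 'a \<Rightarrow> complex"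
  where "local_integrand D V \<rho> f g x = (\<Sum>b\<in>Basis. wpd D b f x * cnj (wpd D b g x))
           + of_real (V x) * f x * cnj (g x) + of_real (\<rho> x) * f x * cnj (g x)"

definition rotation_integrand ::
  "'a::euclidean_space set \<Rightarrow> 'a \<Rightarrow> 'a \<Rightarrow> real \<Rightarrow> ('a \<Rightarrow> complex) \<Rightarrow> ('a \<Rightarrow> complex) \<Rightarrow> 'a \<Rightarrow> complex"
  where "rotation_integrand D e1 e2 \<omega> f g x = of_real \<omega> * cnj (g x) * L3 D e1 e2 f x"

definition R_integrand ::
  "'a::euclidean_space set \<Rightarrow> 'a \<Rightarrow> 'a \<Rightarrow> ('a \<Rightarrow> real) \<Rightarrow> real \<Rightarrow> ('a \<Rightarrow> complex) \<Rightarrow> 'a \<Rightarrow> complex"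
  where "R_integrand D e1 e2 V \<omega> f x = (\<Sum>b\<in>Basis. gradR D e1 e2 \<omega> f b x * cnj (gradR D e1 e2 \<omega> f b x))
           + of_real (V x - \<omega>\<^sup>2 / 4 * ((x \<bullet> e1)\<^sup>2 + (x \<bullet> e2)\<^sup>2)) * f x * cnj (f x)"

lemma a_integrand_eq:
  "a_integrand D e1 e2 p V \<Omega> K \<phi> j v w
     = (\<lambda>x. local_integrand D (V j) (rho p K j \<phi>) (v j) (w j) x - rotation_integrand D e1 e2 (\<Omega> j) (v j) (w j) x)"
  by (simp add: a_integrand_def local_integrand_def rotation_integrand_def algebra_simps fun_eq_iff)

lemma R_inner_eq:
  "R_inner D e1 e2 p V \<Omega> v v = (\<Sum>j<p. Re (LINT x|lebesgue_on D. R_integrand D e1 e2 (V j) (\<Omega> j) (v j) x))"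
  unfolding R_inner_def R_integrand_def VR_def ..

lemma Re_a_integrand_diagonal:
  assumes "e1 \<in> Basis" "e2 \<in> Basis" "e1 \<noteq> e2"
  shows "Re (local_integrand D V \<rho> f f x - rotation_integrand D e1 e2 \<omega> f f x)
           = Re (R_integrand D e1 e2 V \<omega> f x) + \<rho> x * (cmod (f x))\<^sup>2"
proof -
  have "Re (of_real (\<rho> x) * f x * cnj (f x)) = \<rho> x * (cmod (f x))\<^sup>2"
    by (simp add: complex_norm_square[symmetric] mult.assoc)
  with Re_rotation_complete_square[OF assms, of "\<lambda>b. wpd D b f x" "V x" "f x" \<omega> x] show ?thesis
    by (simp add: local_integrand_def rotation_integrand_def R_integrand_def L3_def gradR_def
        algebra_simps)
qed

lemma norm_L3_power2_le:
  assumes axes: "e1 \<in> Basis" "e2 \<in> Basis" "e1 \<noteq> e2" and x: "\<bar>x \<bullet> e1\<bar> \<le> R" "\<bar>x \<bullet> e2\<bar> \<le> R"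
  shows "(cmod (L3 D e1 e2 f x))^2 \<le> 2 * R^2 * ((cmod (f x))\<^sup>2 + (\<Sum>b\<in>Basis. (cmod (wpd D b f x))\<^sup>2))"
proof -
  let ?a = "cmod (wpd D e2 f x)" and ?b = "cmod (wpd D e1 f x)"
  have "cmod (L3 D e1 e2 f x) = cmod (of_real (x \<bullet> e1) * wpd D e2 f x - of_real (x \<bullet> e2) * wpd D e1 f x)"
    unfolding L3_def by (simp add: norm_mult)
  also have "\<dots> \<le> cmod (of_real (x \<bullet> e1) * wpd D e2 f x) + cmod (of_real (x \<bullet> e2) * wpd D e1 f x)"
    by (rule norm_triangle_ineq4)
  also have "\<dots> \<le> R * ?a + R * ?b"
    using x by (intro add_mono) (simp_all add: norm_mult mult_right_mono)
  finally have "(cmod (L3 D e1 e2 f x))^2 \<le> (R * (?a + ?b))^2"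
    by (simp add: power_mono distrib_left)
  also have "\<dots> \<le> 2 * R^2 * (?a^2 + ?b^2)"
  proof -
    have "0 \<le> (?a - ?b)^2" by simp
    then have "(?a + ?b)^2 \<le> 2 * (?a^2 + ?b^2)" by (simp add: power2_eq_square algebra_simps)
    have "(R * (?a + ?b))^2 = R^2 * (?a + ?b)^2" by (rule power_mult_distrib)
    also have "\<dots> \<le> R^2 * (2 * (?a^2 + ?b^2))" using \<open>(?a + ?b)^2 \<le> _\<close> by (rule mult_left_mono) simp
    also have "\<dots> = 2 * R^2 * (?a^2 + ?b^2)" by (simp only: mult_ac)
    finally show ?thesis .
  qed
  also have "\<dots> \<le> 2 * R^2 * ((cmod (f x))\<^sup>2 + (\<Sum>b\<in>Basis. (cmod (wpd D b f x))\<^sup>2))"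
  proof -
    have "?a^2 + ?b^2 = (\<Sum>b\<in>{e1, e2}. (cmod (wpd D b f x))\<^sup>2)" using axes(3) by simp
    also have "\<dots> \<le> (\<Sum>b\<in>Basis. (cmod (wpd D b f x))\<^sup>2)"
      using axes by (intro sum_mono2) auto
    finally show ?thesis by (intro mult_left_mono) (auto simp: add_increasing)
  qed
  finally show ?thesis .
qed

locale rotating_component =
  fixes D :: "'a::euclidean_space set" and e1 e2 :: 'a and V :: "'a \<Rightarrow> real" and C\<^sub>V :: real
    and \<omega> :: real and p :: nat and K :: "nat \<Rightarrow> nat \<Rightarrow> real" and j :: nat
    and \<phi> :: "nat \<Rightarrow> 'a \<Rightarrow> complex"
  assumes dim: "DIM('a) = 2 \<or> DIM('a) = 3" and D: "open D" "bounded D"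
    and axes: "e1 \<in> Basis" "e2 \<in> Basis" "e1 \<noteq> e2"
    and V_measurable: "V \<in> borel_measurable (lebesgue_on D)"
    and V_bounded: "AE x in lebesgue_on D. \<bar>V x\<bar> \<le> C\<^sub>V"
    and K_nonneg: "\<And>i. i < p \<Longrightarrow> 0 \<le> K i j"
    and \<phi>_H10: "\<And>i. i < p \<Longrightarrow> H10 D (\<phi> i)"
begin

abbreviation "M \<equiv> lebesgue_on D"

lemma L3_L2: "H10 D f \<Longrightarrow> L2 D (L3 D e1 e2 f)"
  unfolding L3_def
  by (intro L2_const_mult L2_diff L2_mult_continuous[OF D] H10_wpd(1) axes continuous_intros)

lemma V_mult_L2: "H10 D f \<Longrightarrow> L2 D (\<lambda>x. of_real (V x) * f x)"
  using V_measurable V_bounded by (intro L2_mult_bounded[where B=C\<^sub>V] H10_L2) auto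

lemma rho_mult_eq:
  "of_real (rho p K j \<phi> x) * f x * cnj (g x)
     = (\<Sum>i<p. of_real (K i j) * (of_real ((cmod (\<phi> i x))^2) * f x * cnj (g x)))"
  unfolding rho_def by (simp add: sum_distrib_left sum_distrib_right mult_ac)

lemma rho_nonneg: "0 \<le> rho p K j \<phi> x"
  unfolding rho_def using K_nonneg by (auto intro!: sum_nonneg)

lemma rho_term_integrable:
  "H10 D f \<Longrightarrow> H10 D g \<Longrightarrow> integrable M (\<lambda>x. of_real (rho p K j \<phi> x) * f x * cnj (g x))"
  unfolding rho_mult_eq
  by (intro Bochner_Integration.integrable_sum integrable_mult_right H10_density_term(1)[OF dim D]
      \<phi>_H10) simp_all

lemma local_integrand_integrable:
  assumes "H10 D f" "H10 D g"
  shows "integrable M (local_integrand D V (rho p K j \<phi>) f g)"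
  unfolding local_integrand_def[abs_def] using assms
  by (intro Bochner_Integration.integrable_add Bochner_Integration.integrable_sum rho_term_integrable
      L2_integrable_mult V_mult_L2 L2_cnj H10_L2 H10_wpd(1))

lemma rotation_integrand_integrable:
  assumes "H10 D f" "H10 D g"
  shows "integrable M (rotation_integrand D e1 e2 \<omega> f g)"
  unfolding rotation_integrand_def[abs_def] using assms
  by (intro L2_integrable_mult L2_const_mult L2_cnj H10_L2 L3_L2)

lemma integral_local_integrand_hermitian:
  "(\<integral>x. local_integrand D V (rho p K j \<phi>) g f x \<partial>M) = cnj (\<integral>x. local_integrand D V (rho p K j \<phi>) f g x \<partial>M)"
proof -
  have "local_integrand D V (rho p K j \<phi>) g f x = cnj (local_integrand D V (rho p K j \<phi>) f g x)" for x
    unfolding local_integrand_def by (simp add: mult_ac)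
  then show ?thesis by simp
qed

lemma integral_rotation_integrand_hermitian:
  assumes f: "H10 D f" and g: "H10 D g"
  shows "(\<integral>x. rotation_integrand D e1 e2 \<omega> g f x \<partial>M) = cnj (\<integral>x. rotation_integrand D e1 e2 \<omega> f g x \<partial>M)"
proof -
  define A where "A a b u w = (\<integral>x. of_real (x \<bullet> a) * cnj (w x) * wpd D b u x \<partial>M)" for a b u w
  have swap: "A a b u w = - cnj (A a b w u)"
    if "a \<in> Basis" "b \<in> Basis" "a \<noteq> b" "H10 D u" "H10 D w" for a b u w
  proof -
    have "A a b u w = - (\<integral>x. cnj (of_real (x \<bullet> a) * cnj (u x) * wpd D b w x) \<partial>M)"
      unfolding A_def H10_integration_by_parts[OF D that] by simp
    then show ?thesis unfolding A_def Bochner_Integration.integral_cnj .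
  qed
  have split: "(\<integral>x. rotation_integrand D e1 e2 \<omega> u w x \<partial>M) = of_real \<omega> * (- \<i>) * (A e1 e2 u w - A e2 e1 u w)"
    if u: "H10 D u" and w: "H10 D w" for u w
  proof -
    have "rotation_integrand D e1 e2 \<omega> u w x = of_real \<omega> * (- \<i>)
        * (of_real (x \<bullet> e1) * cnj (w x) * wpd D e2 u x - of_real (x \<bullet> e2) * cnj (w x) * wpd D e1 u x)" for x
      unfolding rotation_integrand_def L3_def by (simp add: algebra_simps)
    moreover have "integrable M (\<lambda>x. of_real (x \<bullet> a) * cnj (w x) * wpd D b u x)" if "b \<in> Basis" for a b
      using u w that by (intro L2_integrable_mult L2_mult_continuous[OF D] L2_cnj H10_L2 H10_wpd(1)
          continuous_intros)
    ultimately show ?thesis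
      unfolding A_def using axes by (simp add: Bochner_Integration.integral_diff)
  qed
  show ?thesis
    unfolding split[OF f g] split[OF g f] swap[OF axes f g] swap[OF axes(2,1) axes(3)[symmetric] f g]
    by (simp add: algebra_simps)
qed

lemma rho_term_bound:
  assumes f: "H10 D f" and g: "H10 D g"
  shows "cmod (\<integral>x. of_real (rho p K j \<phi> x) * f x * cnj (g x) \<partial>M)
           \<le> (\<Sum>i<p. 8 * K i j * H1_norm2 D (\<phi> i)) * sqrt (H1_norm2 D f) * sqrt (H1_norm2 D g)"
proof -
  have "(\<integral>x. of_real (rho p K j \<phi> x) * f x * cnj (g x) \<partial>M)
      = (\<Sum>i<p. of_real (K i j) * (\<integral>x. of_real ((cmod (\<phi> i x))^2) * f x * cnj (g x) \<partial>M))"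
    unfolding rho_mult_eq using H10_density_term(1)[OF dim D \<phi>_H10 f g]
    by (simp add: Bochner_Integration.integral_sum)
  also have "cmod \<dots> \<le> (\<Sum>i<p. cmod (of_real (K i j) * (\<integral>x. of_real ((cmod (\<phi> i x))^2) * f x * cnj (g x) \<partial>M)))"
    by (rule norm_sum)
  also have "\<dots> \<le> (\<Sum>i<p. 8 * K i j * H1_norm2 D (\<phi> i) * sqrt (H1_norm2 D f) * sqrt (H1_norm2 D g))"
  proof (rule sum_mono)
    fix i assume "i \<in> {..<p}"
    then have i: "i < p" by simp
    have "cmod (\<integral>x. of_real ((cmod (\<phi> i x))^2) * f x * cnj (g x) \<partial>M)
        \<le> (\<integral>x. (cmod (\<phi> i x))^2 * (cmod (f x) * cmod (g x)) \<partial>M)"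
      using integral_norm_bound[of M "\<lambda>x. of_real ((cmod (\<phi> i x))^2) * f x * cnj (g x)"]
      by (simp add: norm_mult norm_power mult.assoc)
    also have "\<dots> \<le> 8 * H1_norm2 D (\<phi> i) * sqrt (H1_norm2 D f) * sqrt (H1_norm2 D g)"
      by (rule H10_density_term(2)[OF dim D \<phi>_H10[OF i] f g])
    finally show "cmod (of_real (K i j) * (\<integral>x. of_real ((cmod (\<phi> i x))^2) * f x * cnj (g x) \<partial>M))
        \<le> 8 * K i j * H1_norm2 D (\<phi> i) * sqrt (H1_norm2 D f) * sqrt (H1_norm2 D g)"
      using K_nonneg[OF i] by (simp add: norm_mult mult_left_mono mult.assoc mult.left_commute)
  qed
  also have "\<dots> = (\<Sum>i<p. 8 * K i j * H1_norm2 D (\<phi> i)) * sqrt (H1_norm2 D f) * sqrt (H1_norm2 D g)"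
    by (simp add: sum_distrib_right)
  finally show ?thesis .
qed

lemma gradient_term_bound:
  assumes f: "H10 D f" and g: "H10 D g"
  shows "cmod (\<integral>x. (\<Sum>b\<in>Basis. wpd D b f x * cnj (wpd D b g x)) \<partial>M)
           \<le> DIM('a) * sqrt (H1_norm2 D f) * sqrt (H1_norm2 D g)"
proof -
  have "(\<integral>x. (\<Sum>b\<in>Basis. wpd D b f x * cnj (wpd D b g x)) \<partial>M) = (\<Sum>b\<in>Basis. \<integral>x. wpd D b f x * cnj (wpd D b g x) \<partial>M)"
    using f g by (intro Bochner_Integration.integral_sum L2_integrable_mult L2_cnj H10_wpd(1))
  also have "cmod \<dots> \<le> (\<Sum>b\<in>Basis. cmod (\<integral>x. wpd D b f x * cnj (wpd D b g x) \<partial>M))"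
    by (rule norm_sum)
  also have "\<dots> \<le> (\<Sum>b\<in>(Basis::'a set). sqrt (H1_norm2 D f) * sqrt (H1_norm2 D g))"
    using f g H10_L2_norm_le(2)[OF f] H10_L2_norm_le(2)[OF g]
    by (intro sum_mono norm_integral_mult_le_sqrt L2_cnj H10_wpd(1)) simp_all
  finally show ?thesis by simp
qed

lemma potential_term_bound:
  assumes f: "H10 D f" and g: "H10 D g"
  shows "cmod (\<integral>x. of_real (V x) * f x * cnj (g x) \<partial>M) \<le> \<bar>C\<^sub>V\<bar> * sqrt (H1_norm2 D f) * sqrt (H1_norm2 D g)"
proof -
  have "(\<integral>x. (cmod (of_real (V x) * f x))^2 \<partial>M) \<le> (\<integral>x. C\<^sub>V^2 * (cmod (f x))^2 \<partial>M)"
  proof (rule integral_mono_AE)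
    show "AE x in M. (cmod (of_real (V x) * f x))^2 \<le> C\<^sub>V^2 * (cmod (f x))^2"
      using V_bounded
    proof eventually_elim
      case (elim x)
      then have "\<bar>V x\<bar>^2 \<le> C\<^sub>V^2" by (metis abs_ge_zero abs_le_square_iff order_trans power2_abs abs_ge_self)
      then show ?case by (simp add: norm_mult power_mult_distrib mult_right_mono)
    qed
  qed (use f in \<open>simp_all add: L2_integrable_square V_mult_L2 H10_L2\<close>)
  also have "\<dots> \<le> C\<^sub>V^2 * H1_norm2 D f"
    using H10_L2_norm_le(1)[OF f] by (simp add: mult_left_mono)
  finally have "cmod (\<integral>x. of_real (V x) * f x * cnj (g x) \<partial>M) \<le> sqrt (C\<^sub>V^2 * H1_norm2 D f) * sqrt (H1_norm2 D g)"
    using H10_L2_norm_le(1)[OF g] f g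
    by (intro norm_integral_mult_le_sqrt V_mult_L2 L2_cnj H10_L2) simp_all
  then show ?thesis by (simp add: real_sqrt_mult)
qed

lemma L3_norm2_bound:
  assumes f: "H10 D f" and R: "\<forall>x\<in>D. norm x \<le> R"
  shows "(\<integral>x. (cmod (L3 D e1 e2 f x))^2 \<partial>M) \<le> 2 * R^2 * H1_norm2 D f"
proof -
  have "(\<integral>x. (cmod (L3 D e1 e2 f x))^2 \<partial>M)
      \<le> (\<integral>x. 2 * R^2 * ((cmod (f x))\<^sup>2 + (\<Sum>b\<in>Basis. (cmod (wpd D b f x))\<^sup>2)) \<partial>M)"
  proof (rule integral_mono)
    fix x assume "x \<in> space M"
    then have "\<bar>x \<bullet> e1\<bar> \<le> R" "\<bar>x \<bullet> e2\<bar> \<le> R"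
      using R Basis_le_norm[OF axes(1), of x] Basis_le_norm[OF axes(2), of x]
      by (auto simp: space_restrict_space)
    then show "(cmod (L3 D e1 e2 f x))^2 \<le> 2 * R^2 * ((cmod (f x))\<^sup>2 + (\<Sum>b\<in>Basis. (cmod (wpd D b f x))\<^sup>2))"
      by (rule norm_L3_power2_le[OF axes])
  qed (use f H10_integrable_H1_density[OF f] in \<open>simp_all add: L2_integrable_square L3_L2\<close>)
  also have "\<dots> = 2 * R^2 * H1_norm2 D f" unfolding H1_norm2_def by simp
  finally show ?thesis .
qed

lemma rotation_term_bound:
  assumes f: "H10 D f" and g: "H10 D g" and R: "0 \<le> R" "\<forall>x\<in>D. norm x \<le> R"
  shows "cmod (\<integral>x. rotation_integrand D e1 e2 \<omega> f g x \<partial>M)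
           \<le> \<bar>\<omega>\<bar> * sqrt 2 * R * sqrt (H1_norm2 D f) * sqrt (H1_norm2 D g)"
proof -
  have "(\<integral>x. (cmod (of_real \<omega> * cnj (g x)))^2 \<partial>M) \<le> \<omega>^2 * H1_norm2 D g"
    using H10_L2_norm_le(1)[OF g] by (simp add: norm_mult power_mult_distrib mult_left_mono)
  then have "cmod (\<integral>x. rotation_integrand D e1 e2 \<omega> f g x \<partial>M)
      \<le> sqrt (\<omega>^2 * H1_norm2 D g) * sqrt (2 * R^2 * H1_norm2 D f)"
    unfolding rotation_integrand_def using f g L3_norm2_bound[OF f R(2)]
    by (intro norm_integral_mult_le_sqrt L2_const_mult L2_cnj H10_L2 L3_L2)
  then show ?thesis using R by (simp add: real_sqrt_mult mult_ac)
qed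

lemma component_bound:
  obtains C where "\<And>f g. H10 D f \<Longrightarrow> H10 D g \<Longrightarrow>
    cmod (\<integral>x. local_integrand D V (rho p K j \<phi>) f g x - rotation_integrand D e1 e2 \<omega> f g x \<partial>M)
      \<le> C * sqrt (H1_norm2 D f) * sqrt (H1_norm2 D g)"
proof -
  obtain R where R: "0 \<le> R" "\<forall>x\<in>D. norm x \<le> R"
    using D(2) unfolding bounded_iff by (meson abs_ge_self abs_ge_zero order_trans)
  define C where "C = DIM('a) + \<bar>C\<^sub>V\<bar> + (\<Sum>i<p. 8 * K i j * H1_norm2 D (\<phi> i)) + \<bar>\<omega>\<bar> * sqrt 2 * R"
  have "cmod (\<integral>x. local_integrand D V (rho p K j \<phi>) f g x - rotation_integrand D e1 e2 \<omega> f g x \<partial>M)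
      \<le> C * sqrt (H1_norm2 D f) * sqrt (H1_norm2 D g)" if f: "H10 D f" and g: "H10 D g" for f g
  proof -
    have "(\<integral>x. local_integrand D V (rho p K j \<phi>) f g x - rotation_integrand D e1 e2 \<omega> f g x \<partial>M)
        = (\<integral>x. (\<Sum>b\<in>Basis. wpd D b f x * cnj (wpd D b g x)) \<partial>M) + (\<integral>x. of_real (V x) * f x * cnj (g x) \<partial>M)
          + (\<integral>x. of_real (rho p K j \<phi> x) * f x * cnj (g x) \<partial>M) - (\<integral>x. rotation_integrand D e1 e2 \<omega> f g x \<partial>M)"
      unfolding local_integrand_def using f g
      by (simp add: Bochner_Integration.integrable_sum L2_integrable_mult L2_cnj H10_wpd(1) H10_L2
          V_mult_L2 rho_term_integrable rotation_integrand_integrable)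
    also have "cmod \<dots> \<le> C * sqrt (H1_norm2 D f) * sqrt (H1_norm2 D g)"
      using gradient_term_bound[OF f g] potential_term_bound[OF f g] rho_term_bound[OF f g]
        rotation_term_bound[OF f g R]
        norm_triangle_ineq4 norm_triangle_ineq
      unfolding C_def by (simp add: algebra_simps) (smt (verit) norm_triangle_ineq norm_triangle_ineq4)
    finally show ?thesis .
  qed
  then show ?thesis using that by blast
qed

lemma gradR_L2:
  assumes f: "H10 D f" and b: "b \<in> Basis"
  shows "L2 D (gradR D e1 e2 \<omega> f b)"
proof -
  have "L2 D (\<lambda>x. wpd D b f x + (\<i> * of_real (\<omega> / 2) * of_real (Rvec e1 e2 x \<bullet> b)) * f x)"
    using f b by (intro L2_add L2_mult_continuous[OF D] H10_wpd(1) H10_L2)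
      (auto simp: Rvec_def intro!: continuous_intros)
  then show ?thesis unfolding gradR_def[abs_def] by (simp add: mult.assoc)
qed

lemma R_integrand_integrable:
  assumes f: "H10 D f"
  shows "integrable M (R_integrand D e1 e2 V \<omega> f)"
proof -
  have "L2 D (\<lambda>x. of_real (V x) * f x - of_real (\<omega>\<^sup>2 / 4 * ((x \<bullet> e1)\<^sup>2 + (x \<bullet> e2)\<^sup>2)) * f x)"
    using f by (intro L2_diff V_mult_L2 L2_mult_continuous[OF D] H10_L2 continuous_intros)
  from L2_integrable_mult[OF this L2_cnj[OF H10_L2[OF f]]]
  have potential: "integrable M (\<lambda>x. of_real (V x - \<omega>\<^sup>2 / 4 * ((x \<bullet> e1)\<^sup>2 + (x \<bullet> e2)\<^sup>2)) * f x * cnj (f x))"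
    by (simp only: of_real_diff left_diff_distrib)
  then show ?thesis
    unfolding R_integrand_def[abs_def] using f
    by (intro Bochner_Integration.integrable_add[OF _ potential] Bochner_Integration.integrable_sum
        L2_integrable_mult L2_cnj gradR_L2)
qed

lemma component_coercive:
  assumes f: "H10 D f"
  shows "Re (\<integral>x. R_integrand D e1 e2 V \<omega> f x \<partial>M)
           \<le> Re (\<integral>x. local_integrand D V (rho p K j \<phi>) f f x - rotation_integrand D e1 e2 \<omega> f f x \<partial>M)"
proof -
  have R: "integrable M (\<lambda>x. Re (R_integrand D e1 e2 V \<omega> f x))"
    by (intro integrable_Re R_integrand_integrable f)
  have "integrable M (\<lambda>x. Re (of_real (rho p K j \<phi> x) * f x * cnj (f x)))"
    by (intro integrable_Re rho_term_integrable f)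
  then have \<rho>: "integrable M (\<lambda>x. rho p K j \<phi> x * (cmod (f x))\<^sup>2)"
    by (simp add: complex_norm_square[symmetric] mult.assoc)
  have "Re (\<integral>x. R_integrand D e1 e2 V \<omega> f x \<partial>M) = (\<integral>x. Re (R_integrand D e1 e2 V \<omega> f x) \<partial>M)"
    by (intro integral_Re[symmetric] R_integrand_integrable f)
  also have "\<dots> \<le> (\<integral>x. Re (R_integrand D e1 e2 V \<omega> f x) \<partial>M) + (\<integral>x. rho p K j \<phi> x * (cmod (f x))\<^sup>2 \<partial>M)"
    using rho_nonneg by (simp add: integral_nonneg_AE)
  also have "\<dots> = (\<integral>x. Re (R_integrand D e1 e2 V \<omega> f x) + rho p K j \<phi> x * (cmod (f x))\<^sup>2 \<partial>M)"
    using R \<rho> by simp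
  also have "\<dots> = (\<integral>x. Re (local_integrand D V (rho p K j \<phi>) f f x - rotation_integrand D e1 e2 \<omega> f f x) \<partial>M)"
    by (simp only: Re_a_integrand_diagonal[OF axes])
  also have "\<dots> = Re (\<integral>x. local_integrand D V (rho p K j \<phi>) f f x - rotation_integrand D e1 e2 \<omega> f f x \<partial>M)"
    using f by (intro integral_Re Bochner_Integration.integrable_diff local_integrand_integrable
        rotation_integrand_integrable)
  finally show ?thesis .
qed

lemma R_integral_nonneg:
  assumes "AE x in M. 0 \<le> V x - \<omega>\<^sup>2 / 4 * ((x \<bullet> e1)\<^sup>2 + (x \<bullet> e2)\<^sup>2)" and f: "H10 D f"
  shows "0 \<le> Re (\<integral>x. R_integrand D e1 e2 V \<omega> f x \<partial>M)"
proof -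
  have "AE x in M. 0 \<le> Re (R_integrand D e1 e2 V \<omega> f x)"
    using assms(1)
  proof eventually_elim
    case (elim x)
    have "Re (of_real (V x - \<omega>\<^sup>2 / 4 * ((x \<bullet> e1)\<^sup>2 + (x \<bullet> e2)\<^sup>2)) * f x * cnj (f x))
        = (V x - \<omega>\<^sup>2 / 4 * ((x \<bullet> e1)\<^sup>2 + (x \<bullet> e2)\<^sup>2)) * (cmod (f x))\<^sup>2"
      by (simp add: complex_norm_square[symmetric] mult.assoc)
    with elim show ?case
      unfolding R_integrand_def by (simp add: Re_sum sum_nonneg)
  qed
  then have "0 \<le> (\<integral>x. Re (R_integrand D e1 e2 V \<omega> f x) \<partial>M)"
    by (rule integral_nonneg_AE)
  then show ?thesis
    unfolding integral_Re[OF R_integrand_integrable[OF f]] .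
qed

end

lemma a_form_eq_sum:
  "a_form D e1 e2 p V \<Omega> K \<phi> v w = (\<Sum>j<p. Re (LINT x|lebesgue_on D.
     local_integrand D (V j) (rho p K j \<phi>) (v j) (w j) x - rotation_integrand D e1 e2 (\<Omega> j) (v j) (w j) x))"
  unfolding a_form_def a_integrand_eq ..

context
  fixes D :: "'a::euclidean_space set" and e1 e2 :: 'a and p :: nat and V :: "nat \<Rightarrow> 'a \<Rightarrow> real"
    and C\<^sub>V \<Omega> :: "nat \<Rightarrow> real" and K :: "nat \<Rightarrow> nat \<Rightarrow> real" and \<phi> :: "nat \<Rightarrow> 'a \<Rightarrow> complex"
  assumes components: "\<And>j. j < p \<Longrightarrow> rotating_component D e1 e2 (V j) (C\<^sub>V j) p K j \<phi>"
begin

lemma inH_H10: "inH D p v \<Longrightarrow> j < p \<Longrightarrow> H10 D (v j)"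
  unfolding inH_def by blast

lemma a_integrand_integrable:
  assumes "inH D p v" "inH D p w" "j < p"
  shows "integrable (lebesgue_on D) (a_integrand D e1 e2 p V \<Omega> K \<phi> j v w)"
proof -
  interpret rotating_component D e1 e2 "V j" "C\<^sub>V j" "\<Omega> j" p K j \<phi> by (rule components[OF assms(3)])
  show ?thesis unfolding a_integrand_eq using assms
    by (intro Bochner_Integration.integrable_diff local_integrand_integrable rotation_integrand_integrable
        inH_H10)
qed

lemma a_form_symmetric:
  assumes v: "inH D p v" and w: "inH D p w"
  shows "a_form D e1 e2 p V \<Omega> K \<phi> v w = a_form D e1 e2 p V \<Omega> K \<phi> w v"
  unfolding a_form_eq_sum
proof (rule sum.cong[OF refl])
  fix j assume "j \<in> {..<p}"
  then have j: "j < p" by simp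
  interpret rotating_component D e1 e2 "V j" "C\<^sub>V j" "\<Omega> j" p K j \<phi> by (rule components[OF j])
  have f: "H10 D (v j)" and g: "H10 D (w j)" using inH_H10 v w j by auto
  show "Re (\<integral>x. local_integrand D (V j) (rho p K j \<phi>) (v j) (w j) x - rotation_integrand D e1 e2 (\<Omega> j) (v j) (w j) x \<partial>M)
      = Re (\<integral>x. local_integrand D (V j) (rho p K j \<phi>) (w j) (v j) x - rotation_integrand D e1 e2 (\<Omega> j) (w j) (v j) x \<partial>M)"
    using f g integral_local_integrand_hermitian[of "w j" "v j"] integral_rotation_integrand_hermitian[OF f g]
    by (simp add: Bochner_Integration.integral_diff local_integrand_integrable rotation_integrand_integrable)
qed

lemma H_norm2_nonneg: "0 \<le> H_norm2 D p v"
  unfolding H_norm2_eq_sum_H1_norm2 by (intro sum_nonneg H1_norm2_nonneg)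

lemma H1_norm2_le_H_norm2: "inH D p v \<Longrightarrow> j < p \<Longrightarrow> H1_norm2 D (v j) \<le> H_norm2 D p v"
  unfolding H_norm2_eq_sum_H1_norm2 by (rule member_le_sum) (auto simp: H1_norm2_nonneg)

lemma a_form_bounded:
  obtains C where "\<And>v w. inH D p v \<Longrightarrow> inH D p w \<Longrightarrow>
    \<bar>a_form D e1 e2 p V \<Omega> K \<phi> v w\<bar> \<le> C * sqrt (H_norm2 D p v) * sqrt (H_norm2 D p w)"
proof -
  have "\<forall>j. \<exists>C. j < p \<longrightarrow> (\<forall>f g. H10 D f \<longrightarrow> H10 D g \<longrightarrow>
      cmod (\<integral>x. local_integrand D (V j) (rho p K j \<phi>) f g x - rotation_integrand D e1 e2 (\<Omega> j) f g x \<partial>lebesgue_on D)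
        \<le> C * sqrt (H1_norm2 D f) * sqrt (H1_norm2 D g))"
  proof
    fix j
    show "\<exists>C. j < p \<longrightarrow> (\<forall>f g. H10 D f \<longrightarrow> H10 D g \<longrightarrow>
      cmod (\<integral>x. local_integrand D (V j) (rho p K j \<phi>) f g x - rotation_integrand D e1 e2 (\<Omega> j) f g x \<partial>lebesgue_on D)
        \<le> C * sqrt (H1_norm2 D f) * sqrt (H1_norm2 D g))"
    proof (cases "j < p")
      case True
      then show ?thesis
        using rotating_component.component_bound[OF components[OF True], of "\<Omega> j"] by blast
    qed simp
  qed
  then obtain C where C: "\<And>j f g. j < p \<Longrightarrow> H10 D f \<Longrightarrow> H10 D g \<Longrightarrow>
      cmod (\<integral>x. local_integrand D (V j) (rho p K j \<phi>) f g x - rotation_integrand D e1 e2 (\<Omega> j) f g x \<partial>lebesgue_on D)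
        \<le> C j * sqrt (H1_norm2 D f) * sqrt (H1_norm2 D g)"
    by metis
  have "\<bar>a_form D e1 e2 p V \<Omega> K \<phi> v w\<bar> \<le> (\<Sum>j<p. \<bar>C j\<bar>) * sqrt (H_norm2 D p v) * sqrt (H_norm2 D p w)"
    if v: "inH D p v" and w: "inH D p w" for v w
  proof -
    have "\<bar>a_form D e1 e2 p V \<Omega> K \<phi> v w\<bar> \<le> (\<Sum>j<p. \<bar>C j\<bar> * sqrt (H_norm2 D p v) * sqrt (H_norm2 D p w))"
      unfolding a_form_eq_sum
    proof (rule order.trans[OF sum_abs sum_mono])
      fix j assume "j \<in> {..<p}"
      then have j: "j < p" by simp
      have "\<bar>Re (\<integral>x. local_integrand D (V j) (rho p K j \<phi>) (v j) (w j) x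
            - rotation_integrand D e1 e2 (\<Omega> j) (v j) (w j) x \<partial>lebesgue_on D)\<bar>
          \<le> C j * sqrt (H1_norm2 D (v j)) * sqrt (H1_norm2 D (w j))"
        using abs_Re_le_cmod C[OF j inH_H10[OF v j] inH_H10[OF w j]] by (rule order.trans)
      also have "\<dots> \<le> \<bar>C j\<bar> * sqrt (H_norm2 D p v) * sqrt (H_norm2 D p w)"
        using H1_norm2_le_H_norm2[OF v j] H1_norm2_le_H_norm2[OF w j] H1_norm2_nonneg H_norm2_nonneg
        by (intro mult_mono abs_ge_self real_sqrt_le_mono) auto
      finally show "\<bar>Re (\<integral>x. local_integrand D (V j) (rho p K j \<phi>) (v j) (w j) x
            - rotation_integrand D e1 e2 (\<Omega> j) (v j) (w j) x \<partial>lebesgue_on D)\<bar>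
          \<le> \<bar>C j\<bar> * sqrt (H_norm2 D p v) * sqrt (H_norm2 D p w)" .
    qed
    then show ?thesis by (simp add: sum_distrib_right)
  qed
  then show ?thesis using that by blast
qed

lemma a_form_coercive:
  assumes VR: "\<And>j. j < p \<Longrightarrow> AE x in lebesgue_on D. 0 \<le> V j x - (\<Omega> j)\<^sup>2 / 4 * ((x \<bullet> e1)\<^sup>2 + (x \<bullet> e2)\<^sup>2)"
    and v: "inH D p v"
  shows "(R_norm D e1 e2 p V \<Omega> v)\<^sup>2 \<le> a_form D e1 e2 p V \<Omega> K \<phi> v v"
proof -
  have "0 \<le> R_inner D e1 e2 p V \<Omega> v v"
    unfolding R_inner_eq using rotating_component.R_integral_nonneg[OF components VR inH_H10[OF v]]
    by (auto intro!: sum_nonneg)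
  then have "(R_norm D e1 e2 p V \<Omega> v)\<^sup>2 = R_inner D e1 e2 p V \<Omega> v v"
    unfolding R_norm_def by simp
  also have "\<dots> \<le> a_form D e1 e2 p V \<Omega> K \<phi> v v"
    unfolding R_inner_eq a_form_eq_sum
    using rotating_component.component_coercive[OF components inH_H10[OF v]] by (intro sum_mono) auto
  finally show ?thesis .
qed

end

lemma AE_centrifugal_le_potential:
  assumes "\<exists>\<epsilon>>0. AE x in M. V x - (1 + \<epsilon>) / 4 * \<omega>\<^sup>2 * ((x \<bullet> e1)\<^sup>2 + (x \<bullet> e2)\<^sup>2) \<ge> 0"
  shows "AE x in M. 0 \<le> V x - \<omega>\<^sup>2 / 4 * ((x \<bullet> e1)\<^sup>2 + (x \<bullet> e2)\<^sup>2)"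
proof -
  obtain \<epsilon> where "\<epsilon> > 0" and AE: "AE x in M. V x - (1 + \<epsilon>) / 4 * \<omega>\<^sup>2 * ((x \<bullet> e1)\<^sup>2 + (x \<bullet> e2)\<^sup>2) \<ge> 0"
    using assms by blast
  from AE show ?thesis
  proof eventually_elim
    case (elim x)
    have "0 \<le> \<epsilon> / 4 * \<omega>\<^sup>2 * ((x \<bullet> e1)\<^sup>2 + (x \<bullet> e2)\<^sup>2)" using \<open>\<epsilon> > 0\<close> by simp
    with elim show ?case by (simp add: algebra_simps)
  qed
qed

theorem proposition3p1:
  fixes D :: "'a::euclidean_space set"
    and e1 e2 :: 'a
    and p :: nat
    and V :: "nat \<Rightarrow> 'a \<Rightarrow> real"
    and \<Omega> :: "nat \<Rightarrow> real"
    and K :: "nat \<Rightarrow> nat \<Rightarrow> real"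
  assumes dim: "DIM('a) = 2 \<or> DIM('a) = 3"
    and axes: "e1 \<in> Basis" "e2 \<in> Basis" "e1 \<noteq> e2"
    and dom: "open D" "bounded D" "convex D" "D \<noteq> {}"
    and p: "p \<ge> 1"
    and A1: "\<And>j. j < p \<Longrightarrow> V j \<in> borel_measurable (lebesgue_on D) \<and>
                 (\<exists>C. AE x in lebesgue_on D. \<bar>V j x\<bar> \<le> C) \<and>
                 (AE x in lebesgue_on D. V j x \<ge> 0)"
    and A2: "\<And>j. j < p \<Longrightarrow> \<exists>\<epsilon>>0. AE x in lebesgue_on D.
                 V j x - (1 + \<epsilon>) / 4 * (\<Omega> j)\<^sup>2 * ((x \<bullet> e1)\<^sup>2 + (x \<bullet> e2)\<^sup>2) \<ge> 0"
    and A3: "\<And>i j. i < p \<Longrightarrow> j < p \<Longrightarrow> K i j = K j i \<and> K i j \<ge> 0"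
    and \<phi>H: "inH D p \<phi>"
  shows "(\<forall>v w. inH D p v \<longrightarrow> inH D p w \<longrightarrow>
            (\<forall>j<p. integrable (lebesgue_on D) (a_integrand D e1 e2 p V \<Omega> K \<phi> j v w)))
       \<and> (\<forall>v w. inH D p v \<longrightarrow> inH D p w \<longrightarrow>
            a_form D e1 e2 p V \<Omega> K \<phi> v w = a_form D e1 e2 p V \<Omega> K \<phi> w v)
       \<and> (\<exists>C. \<forall>v w. inH D p v \<longrightarrow> inH D p w \<longrightarrow>
            \<bar>a_form D e1 e2 p V \<Omega> K \<phi> v w\<bar> \<le> C * sqrt (H_norm2 D p v) * sqrt (H_norm2 D p w))
       \<and> (\<forall>v. inH D p v \<longrightarrow>
            a_form D e1 e2 p V \<Omega> K \<phi> v v \<ge> (R_norm D e1 e2 p V \<Omega> v)\<^sup>2)"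
proof -
  have "\<forall>j. \<exists>C. j < p \<longrightarrow> (AE x in lebesgue_on D. \<bar>V j x\<bar> \<le> C)"
    using A1 by blast
  then obtain C\<^sub>V where C\<^sub>V: "\<And>j. j < p \<Longrightarrow> AE x in lebesgue_on D. \<bar>V j x\<bar> \<le> C\<^sub>V j"
    by metis
  have components: "rotating_component D e1 e2 (V j) (C\<^sub>V j) p K j \<phi>" if j: "j < p" for j
  proof
    show "0 \<le> K i j" if "i < p" for i using A3[OF that j] by blast
  qed (use dim axes dom A1[OF j] C\<^sub>V[OF j] \<phi>H inH_def in auto)
  have VR: "AE x in lebesgue_on D. 0 \<le> V j x - (\<Omega> j)\<^sup>2 / 4 * ((x \<bullet> e1)\<^sup>2 + (x \<bullet> e2)\<^sup>2)"
    if "j < p" for j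
    using A2[OF that] by (rule AE_centrifugal_le_potential)
  obtain C where "\<And>v w. inH D p v \<Longrightarrow> inH D p w \<Longrightarrow>
      \<bar>a_form D e1 e2 p V \<Omega> K \<phi> v w\<bar> \<le> C * sqrt (H_norm2 D p v) * sqrt (H_norm2 D p w)"
    using a_form_bounded[OF components, where \<Omega>=\<Omega>] by blast
  then show ?thesis
    using a_integrand_integrable[OF components] a_form_symmetric[OF components]
      a_form_coercive[OF components VR] by blast
qed

end
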